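(* Let $q \ge 3$ be an integer and let $\overline{G}_q$ be the image in $\mathrm{PSL}(2,\mathbb{R})$ of the Hecke triangle group $G_q$. Consider elements of $\overline{G}_q$ of the form $S T^{n_1} S T^{n_2} \cdots S T^{n_k}$ with $k > 0$, where $n_j \neq 0$ for $1 \le j \le k$, the $n_j$ are not all of the same sign, and in the cyclically ordered sequence $n_1, \dots, n_k$ the maximum number of consecutive $1$'s or of consecutive $(-1)$'s is less than $q/2 - 2$. Two such elements are conjugate in $\overline{G}_q$ if and only if their defining sequences are cyclic permutations of each other.
   Context: $G_q \subset \mathrm{SL}(2,\mathbb{R})$ is generated by $S = \begin{pmatrix} 0 & -1 \\ 1 & 0 \end{pmatrix}$ and $T = T_q = \begin{pmatrix} 1 & \lambda_q \\ 0 & 1 \end{pmatrix}$ with $\lambda_q = 2\cos(\pi/q)$; $S$ and $T$ also denote their images in $\mathrm{PSL}(2,\mathbb{R})$. *)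

theory Defs
  imports "HOL-Analysis.Analysis"
begin

type_synonym mat2 = "real^2^2"

definition mat2 :: "real \<Rightarrow> real \<Rightarrow> real \<Rightarrow> real \<Rightarrow> mat2" where
  "mat2 a b c d = vector [vector [a, b], vector [c, d]]"

definition lambda_q :: "nat \<Rightarrow> real" where
  "lambda_q q = 2 * cos (pi / real q)"

definition S_mat :: mat2 where
  "S_mat = mat2 0 (-1) 1 0"

definition T_mat :: "nat \<Rightarrow> mat2" where
  "T_mat q = mat2 1 (lambda_q q) 0 1"

definition T_inv_mat :: "nat \<Rightarrow> mat2" where
  "T_inv_mat q = mat2 1 (- lambda_q q) 0 1"

primrec mpow :: "mat2 \<Rightarrow> nat \<Rightarrow> mat2" where
  "mpow A 0 = mat 1"
| "mpow A (Suc n) = A ** mpow A n"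

definition T_pow :: "nat \<Rightarrow> int \<Rightarrow> mat2" where
  "T_pow q n = (if n \<ge> 0 then mpow (T_mat q) (nat n) else mpow (T_inv_mat q) (nat (- n)))"

inductive_set hecke_group :: "nat \<Rightarrow> mat2 set" for q where
  id: "mat 1 \<in> hecke_group q"
| mS: "A \<in> hecke_group q \<Longrightarrow> S_mat ** A \<in> hecke_group q"
| mSi: "A \<in> hecke_group q \<Longrightarrow> matrix_inv S_mat ** A \<in> hecke_group q"
| mT: "A \<in> hecke_group q \<Longrightarrow> T_mat q ** A \<in> hecke_group q"
| mTi: "A \<in> hecke_group q \<Longrightarrow> matrix_inv (T_mat q) ** A \<in> hecke_group q"

primrec hecke_word :: "nat \<Rightarrow> int list \<Rightarrow> mat2" where
  "hecke_word q [] = mat 1"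
| "hecke_word q (n # ns) = S_mat ** T_pow q n ** hecke_word q ns"

text \<open>Conjugacy in the image of G_q in PSL(2,R): g A g^{-1} = +-B for some g in G_q.\<close>
definition conj_PSL :: "nat \<Rightarrow> mat2 \<Rightarrow> mat2 \<Rightarrow> bool" where
  "conj_PSL q A B \<longleftrightarrow>
     (\<exists>g\<in>hecke_group q. g ** A ** matrix_inv g = B \<or> g ** A ** matrix_inv g = - B)"

definition admissible :: "nat \<Rightarrow> int list \<Rightarrow> bool" where
  "admissible q ns \<longleftrightarrow>
     ns \<noteq> [] \<and> (\<forall>n\<in>set ns. n \<noteq> 0) \<and>
     (\<exists>a\<in>set ns. \<exists>b\<in>set ns. a > 0 \<and> b < 0) \<and>
     (\<forall>e\<in>{1, -1}. \<forall>i m. (\<forall>t<m. ns ! ((i + t) mod length ns) = e)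
         \<longrightarrow> real m < real q / 2 - 2)"

end

theory Submission
  imports Defs "HOL-Library.Sublist"
begin

text \<open>The image of \<open>G\<^sub>q\<close> in \<open>PSL(2,\<real>)\<close> is the free product of the cyclic groups of orders \<open>2\<close>
  and \<open>q\<close> generated by \<open>S\<close> and \<open>U = S T\<close>: we have \<open>U\<^sup>q = -1\<close>, and a ping-pong argument on the
  quadrants \<open>xy > 0\<close> and \<open>xy < 0\<close> shows that no nonempty reduced word in \<open>S\<close> and the \<open>U\<^sup>a\<close>
  (\<open>0 < a < q\<close>) is \<open>\<plusminus>1\<close>. So elements correspond to reduced words, and two cyclically reduced words
  are conjugate only if they are rotations of each other.

  Up to sign, \<open>S T\<^sup>n\<close> is \<open>U S U \<dots> S U\<close> for \<open>n > 0\<close> and \<open>S U\<^sup>-\<^sup>1 S \<dots> U\<^sup>-\<^sup>1 S\<close> for \<open>n < 0\<close>.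
  Once the sequence is rotated so that it changes sign from \<open>n\<^sub>k > 0\<close> to \<open>n\<^sub>1 < 0\<close>, the word
  \<open>S T\<^bsup>n\<^sub>1\<^esup> \<dots> S T\<^bsup>n\<^sub>k\<^esup>\<close> becomes cyclically reduced; each of its syllables \<open>U\<^sup>c\<close> comes from a
  run of consecutive entries \<open>\<plusminus>1\<close> extended by one letter at either end. The bound on these runs
  gives \<open>2 |c| < q\<close>, so \<open>c\<close> is determined by \<open>c mod q\<close>, and a rotation of the syllables lifts to a
  rotation of \<open>n\<^sub>1, \<dots>, n\<^sub>k\<close>.\<close>

section \<open>Matrices up to sign\<close>

lemma mat2_nth [simp]:
  "mat2 a b c d $ 1 $ 1 = a" "mat2 a b c d $ 1 $ 2 = b"
  "mat2 a b c d $ 2 $ 1 = c" "mat2 a b c d $ 2 $ 2 = d"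
  by (simp_all add: mat2_def vector_2)

lemma mat2_eq_iff: "(M::mat2) = N \<longleftrightarrow> M$1$1 = N$1$1 \<and> M$1$2 = N$1$2 \<and> M$2$1 = N$2$1 \<and> M$2$2 = N$2$2"
  by (auto simp: vec_eq_iff forall_2)

lemma mat2_inject: "mat2 a b c d = mat2 a' b' c' d' \<longleftrightarrow> a = a' \<and> b = b' \<and> c = c' \<and> d = d'"
  by (simp add: mat2_eq_iff)

lemma mat2_mult: "mat2 a b c d ** mat2 e f g h = mat2 (a*e+b*g) (a*f+b*h) (c*e+d*g) (c*f+d*h)"
  by (simp add: mat2_eq_iff matrix_matrix_mult_def sum_2)

lemma mat2_one: "(mat 1 :: mat2) = mat2 1 0 0 1"
  by (simp add: mat2_eq_iff mat_def)

lemma mat2_uminus: "- mat2 a b c d = mat2 (-a) (-b) (-c) (-d)"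
  by (simp add: mat2_eq_iff)

lemma matrix_mul_minus_left: "(- A) ** B = - (A ** (B::'a::ring_1^'n^'m))"
  by (simp add: matrix_matrix_mult_def vec_eq_iff sum_negf)

lemma matrix_mul_minus_right: "A ** (- B) = - ((A::'a::ring_1^'n^'m) ** B)"
  by (simp add: matrix_matrix_mult_def vec_eq_iff sum_negf)

lemma matrix_vector_mult_2:
  "((M::mat2) *v v) $ 1 = M$1$1 * v$1 + M$1$2 * v$2"
  "((M::mat2) *v v) $ 2 = M$2$1 * v$1 + M$2$2 * v$2"
  by (simp_all add: matrix_vector_mult_def sum_2)

lemma matrix_inv_unique:
  "(A::'a::semiring_1^'n^'n) ** B = mat 1 \<Longrightarrow> B ** A = mat 1 \<Longrightarrow> matrix_inv A = B"
  unfolding matrix_inv_def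
  by (rule some_equality) (auto, metis matrix_mul_assoc matrix_mul_lid matrix_mul_rid)

lemma matrix_inv_mult:
  "invertible A \<Longrightarrow> A ** matrix_inv A = mat 1" "invertible A \<Longrightarrow> matrix_inv A ** A = mat 1"
  unfolding invertible_def matrix_inv_def by (metis (mono_tags, lifting) someI_ex)+

text \<open>Equality in \<open>PSL(2,\<real>)\<close>.\<close>
definition pm_eq :: "'a::group_add \<Rightarrow> 'a \<Rightarrow> bool" (infix "\<simeq>" 50) where
  "A \<simeq> B \<longleftrightarrow> A = B \<or> A = - B"

lemma pm_eq_refl [simp]: "A \<simeq> A"
  by (simp add: pm_eq_def)

lemma pm_eq_sym: "A \<simeq> B \<Longrightarrow> B \<simeq> A"
  by (auto simp: pm_eq_def)

lemma pm_eq_trans [trans]: "A \<simeq> B \<Longrightarrow> B \<simeq> C \<Longrightarrow> A \<simeq> C"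
  by (auto simp: pm_eq_def)

lemma pm_eq_uminus [simp]: "A \<simeq> - B \<longleftrightarrow> A \<simeq> B" "- A \<simeq> B \<longleftrightarrow> A \<simeq> B"
  by (auto simp: pm_eq_def)

lemma pm_eq_mult_left: "A \<simeq> B \<Longrightarrow> C ** A \<simeq> C ** (B::'a::ring_1^'n^'m)"
  by (auto simp: pm_eq_def matrix_mul_minus_right)

lemma pm_eq_mult_right: "A \<simeq> B \<Longrightarrow> A ** C \<simeq> (B::'a::ring_1^'n^'m) ** C"
  by (auto simp: pm_eq_def matrix_mul_minus_left)

lemma pm_eq_mult: "A \<simeq> B \<Longrightarrow> C \<simeq> D \<Longrightarrow> A ** C \<simeq> (B::'a::ring_1^'n^'m) ** D"
  by (meson pm_eq_mult_left pm_eq_mult_right pm_eq_trans)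

lemma pm_eq_cancel_left:
  assumes "X ** Y \<simeq> mat 1" "Y ** A \<simeq> Y ** B"
  shows "A \<simeq> (B::'a::ring_1^'n^'n)"
proof -
  have "A \<simeq> (X ** Y) ** A" using pm_eq_mult_right[OF assms(1), of A] by (simp add: pm_eq_sym)
  also have "\<dots> = X ** (Y ** A)" by (simp add: matrix_mul_assoc)
  also have "\<dots> \<simeq> X ** (Y ** B)" by (rule pm_eq_mult_left[OF assms(2)])
  also have "\<dots> = (X ** Y) ** B" by (simp add: matrix_mul_assoc)
  also have "\<dots> \<simeq> B" using pm_eq_mult_right[OF assms(1), of B] by simp
  finally show ?thesis .
qed

lemma pm_eq_cancel_right:
  assumes "Y ** X \<simeq> mat 1" "A ** Y \<simeq> B ** Y"
  shows "A \<simeq> (B::'a::ring_1^'n^'n)"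
proof -
  have "A \<simeq> A ** (Y ** X)" using pm_eq_mult_left[OF assms(1), of A] by (simp add: pm_eq_sym)
  also have "\<dots> = (A ** Y) ** X" by (simp add: matrix_mul_assoc)
  also have "\<dots> \<simeq> (B ** Y) ** X" by (rule pm_eq_mult_right[OF assms(2)])
  also have "\<dots> = B ** (Y ** X)" by (simp add: matrix_mul_assoc)
  also have "\<dots> \<simeq> B" using pm_eq_mult_left[OF assms(1), of B] by simp
  finally show ?thesis .
qed

lemma mpow_add: "mpow A (m + n) = mpow A m ** mpow A n"
  by (induction m) (simp_all add: matrix_mul_assoc)

lemma mpow_Suc_right: "mpow A (Suc n) = mpow A n ** A"
  using mpow_add[of A n 1] by simp

lemma mpow_mult: "mpow A (m * n) = mpow (mpow A m) n"
  by (induction n) (simp_all add: mpow_add)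

lemma mpow_minus_one: "mpow (- mat 1) k \<simeq> mat 1"
  by (induction k) (auto simp: matrix_mul_minus_left pm_eq_def)


section \<open>The generators \<open>S\<close> and \<open>U = S T\<close>\<close>

lemma S_mult_S: "S_mat ** S_mat = - mat 1"
  by (simp add: S_mat_def mat2_mult mat2_one mat2_uminus)

lemma matrix_inv_S: "matrix_inv S_mat = - S_mat"
  by (rule matrix_inv_unique) (simp_all add: matrix_mul_minus_left matrix_mul_minus_right S_mult_S)

lemma T_mult_T_inv: "T_mat q ** T_inv_mat q = mat 1" "T_inv_mat q ** T_mat q = mat 1"
  by (simp_all add: T_mat_def T_inv_mat_def mat2_mult mat2_one)

lemma matrix_inv_T: "matrix_inv (T_mat q) = T_inv_mat q"
  by (rule matrix_inv_unique) (simp_all add: T_mult_T_inv)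

definition U_mat :: "nat \<Rightarrow> mat2" where
  "U_mat q = S_mat ** T_mat q"

lemma U_mat_eq: "U_mat q = mat2 0 (-1) 1 (lambda_q q)"
  by (simp add: U_mat_def S_mat_def T_mat_def mat2_mult)

lemma T_pm_eq: "T_mat q \<simeq> S_mat ** U_mat q"
proof -
  have "S_mat ** U_mat q = - T_mat q"
    by (simp add: U_mat_def matrix_mul_assoc S_mult_S matrix_mul_minus_left)
  then show ?thesis by (simp add: pm_eq_def)
qed

text \<open>The entries of \<open>U\<^sup>n\<close> are \<open>sin (n\<pi>/q) / sin (\<pi>/q)\<close>, Chebyshev polynomials of the second kind
  evaluated at \<open>\<lambda>\<^sub>q / 2 = cos (\<pi>/q)\<close>.\<close>
definition sin_quot :: "nat \<Rightarrow> real \<Rightarrow> real" where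
  "sin_quot q x = sin (x * pi / q) / sin (pi / q)"

locale hecke =
  fixes q :: nat
  assumes q_ge_3: "3 \<le> q"
begin

lemma sin_pi_div_q_pos: "sin (pi / q) > 0"
  using q_ge_3 by (intro sin_gt_zero) (auto simp: field_simps)

lemma sin_quot_rec: "sin_quot q (x + 1) = lambda_q q * sin_quot q x - sin_quot q (x - 1)"
proof -
  have plus: "(x + 1) * pi / q = x * pi / q + pi / q"
    and minus: "(x - 1) * pi / q = x * pi / q - pi / q"
    by (simp_all add: add_divide_distrib diff_divide_distrib algebra_simps)
  show ?thesis
    using sin_pi_div_q_pos unfolding sin_quot_def lambda_q_def plus minus sin_add sin_diff
    by (simp add: field_simps)
qed

lemma sin_quot_nonneg: "0 \<le> (k::real) \<Longrightarrow> k \<le> q \<Longrightarrow> sin_quot q k \<ge> 0"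
  unfolding sin_quot_def using sin_pi_div_q_pos q_ge_3
  by (intro divide_nonneg_pos sin_ge_zero) (auto simp: field_simps)

lemma sin_quot_pos: "0 < (k::real) \<Longrightarrow> k < q \<Longrightarrow> sin_quot q k > 0"
  unfolding sin_quot_def using sin_pi_div_q_pos q_ge_3
  by (intro divide_pos_pos sin_gt_zero) (auto simp: field_simps)

lemma mpow_U:
  "mpow (U_mat q) n =
     mat2 (- sin_quot q (real n - 1)) (- sin_quot q n) (sin_quot q n) (sin_quot q (real n + 1))"
proof (induction n)
  case 0
  then show ?case using sin_pi_div_q_pos by (simp add: mat2_one sin_quot_def)
next
  case (Suc n)
  have "sin_quot q (real n + 1) = lambda_q q * sin_quot q n - sin_quot q (real n - 1)"
    using sin_quot_rec[of n] by simp
  moreover have "sin_quot q (real n + 1 + 1) = lambda_q q * sin_quot q (real n + 1) - sin_quot q n"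
    using sin_quot_rec[of "real n + 1"] by simp
  ultimately show ?case using Suc by (simp add: U_mat_eq mat2_mult mat2_inject add.commute)
qed

lemma mpow_U_q: "mpow (U_mat q) q = - mat 1"
proof -
  have "(real q - 1) * pi / q = pi - pi / q" "(real q + 1) * pi / q = pi / q + pi"
    using q_ge_3 by (simp_all add: field_simps)
  then show ?thesis
    using sin_pi_div_q_pos q_ge_3 by (simp add: mpow_U sin_quot_def sin_add mat2_one mat2_uminus)
qed

lemma T_inv_pm_eq: "T_inv_mat q \<simeq> mpow (U_mat q) (q - 1) ** S_mat"
proof -
  have "U_mat q ** (T_inv_mat q ** S_mat) = - mat 1"
    by (simp add: U_mat_def S_mat_def T_mat_def T_inv_mat_def mat2_mult mat2_one mat2_uminus)
  then have "mpow (U_mat q) (q - 1) = - (mpow (U_mat q) (Suc (q - 1)) ** (T_inv_mat q ** S_mat))"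
    by (simp only: mpow_Suc_right matrix_mul_assoc[symmetric])
      (simp add: matrix_mul_assoc matrix_mul_minus_right)
  also have "\<dots> = T_inv_mat q ** S_mat"
    using q_ge_3 mpow_U_q by (simp add: matrix_mul_minus_left)
  finally have "mpow (U_mat q) (q - 1) ** S_mat = - T_inv_mat q"
    by (simp add: matrix_mul_assoc[symmetric] S_mult_S matrix_mul_minus_right)
  then show ?thesis by (simp add: pm_eq_def)
qed

lemma mpow_U_mod: "mpow (U_mat q) n \<simeq> mpow (U_mat q) (n mod q)"
proof -
  have "mpow (U_mat q) n = mpow (U_mat q) (q * (n div q) + n mod q)" by simp
  also have "\<dots> = mpow (- mat 1) (n div q) ** mpow (U_mat q) (n mod q)"
    by (simp only: mpow_add mpow_mult mpow_U_q)
  also have "\<dots> \<simeq> mat 1 ** mpow (U_mat q) (n mod q)"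
    by (rule pm_eq_mult_right[OF mpow_minus_one])
  finally show ?thesis by simp
qed

lemma mpow_U_add_mod: "mpow (U_mat q) a ** mpow (U_mat q) b \<simeq> mpow (U_mat q) ((a + b) mod q)"
  by (metis mpow_U_mod mpow_add)

lemma mpow_U_cong: "a mod q = b mod q \<Longrightarrow> mpow (U_mat q) a \<simeq> mpow (U_mat q) b"
  by (metis mpow_U_mod pm_eq_sym pm_eq_trans)

end

section \<open>Reduced words and the ping-pong argument\<close>

fun alternating :: "'a::zero list \<Rightarrow> bool" where
  "alternating [] = True"
| "alternating [x] = True"
| "alternating (x # y # r) = ((x = 0) \<noteq> (y = 0) \<and> alternating (y # r))"

lemma alternating_Cons:
  "alternating (x # ys) \<longleftrightarrow> alternating ys \<and> (ys \<noteq> [] \<longrightarrow> (x = 0) \<noteq> (hd ys = 0))"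
  by (cases ys) auto

lemma alternating_append:
  "alternating (xs @ ys) \<longleftrightarrow> alternating xs \<and> alternating ys \<and>
     (xs \<noteq> [] \<longrightarrow> ys \<noteq> [] \<longrightarrow> (last xs = 0) \<noteq> (hd ys = 0))"
  by (induction xs) (auto simp: alternating_Cons)

lemma alternating_rev: "alternating (rev xs) = alternating xs"
  by (induction xs) (auto simp: alternating_Cons alternating_append hd_rev last_rev)

lemma mod_neq_0: "0 < (n::nat) \<Longrightarrow> n < 2 * m \<Longrightarrow> n \<noteq> m \<Longrightarrow> n mod m \<noteq> 0"
  by (cases "n < m") (auto simp: le_mod_geq)

context hecke
begin

text \<open>Words over the free product \<open>\<langle>S\<rangle> * \<langle>U\<rangle> \<cong> \<int>/2 * \<int>/q\<close>: the letter \<open>0\<close> stands for \<open>S\<close>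
  and a letter \<open>0 < a < q\<close> for \<open>U\<^sup>a\<close>.\<close>
definition letter :: "nat \<Rightarrow> mat2" where
  "letter a = (if a = 0 then S_mat else mpow (U_mat q) a)"

fun word_mat :: "nat list \<Rightarrow> mat2" where
  "word_mat [] = mat 1"
| "word_mat (a # w) = letter a ** word_mat w"

definition reduced :: "nat list \<Rightarrow> bool" where
  "reduced w \<longleftrightarrow> alternating w \<and> (\<forall>a\<in>set w. a < q)"

definition letter_inv :: "nat \<Rightarrow> nat" where
  "letter_inv a = (if a = 0 then 0 else q - a)"

definition word_inv :: "nat list \<Rightarrow> nat list" where
  "word_inv w = rev (map letter_inv w)"

lemma word_mat_append: "word_mat (xs @ ys) = word_mat xs ** word_mat ys"
  by (induction xs) (simp_all add: matrix_mul_assoc)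

lemma reduced_Nil [simp]: "reduced []"
  by (simp add: reduced_def)

lemma reduced_Cons:
  "reduced (a # w) \<longleftrightarrow> a < q \<and> reduced w \<and> (w \<noteq> [] \<longrightarrow> (a = 0) \<noteq> (hd w = 0))"
  by (auto simp: reduced_def alternating_Cons)

lemma reduced_append:
  "reduced (xs @ ys) \<longleftrightarrow> reduced xs \<and> reduced ys \<and>
     (xs \<noteq> [] \<longrightarrow> ys \<noteq> [] \<longrightarrow> (last xs = 0) \<noteq> (hd ys = 0))"
  by (auto simp: reduced_def alternating_append)

lemma reduced_Cons_snoc:
  "reduced (a # m @ [c]) \<longleftrightarrow> a < q \<and> c < q \<and> reduced m \<and> (m = [] \<longrightarrow> (a = 0) \<noteq> (c = 0)) \<and>
     (m \<noteq> [] \<longrightarrow> (a = 0) \<noteq> (hd m = 0) \<and> (last m = 0) \<noteq> (c = 0))"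
  by (cases "m = []") (auto simp: reduced_Cons reduced_append hd_append)

lemma letter_inv_less: "a < q \<Longrightarrow> letter_inv a < q"
  using q_ge_3 by (simp add: letter_inv_def)

lemma letter_inv_eq_0_iff: "a < q \<Longrightarrow> letter_inv a = 0 \<longleftrightarrow> a = 0"
  by (auto simp: letter_inv_def)

lemma letter_inv_letter_inv: "a < q \<Longrightarrow> letter_inv (letter_inv a) = a"
  by (auto simp: letter_inv_def)

lemma reduced_word_inv: "reduced w \<Longrightarrow> reduced (word_inv w)"
proof -
  have "alternating (map letter_inv w) = alternating w" if "\<forall>a\<in>set w. a < q"
    using that by (induction w) (auto simp: alternating_Cons letter_inv_eq_0_iff hd_map)
  then show "reduced w \<Longrightarrow> reduced (word_inv w)"
    by (auto simp: reduced_def word_inv_def alternating_rev letter_inv_less)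
qed

lemma word_inv_word_inv: "\<forall>a\<in>set w. a < q \<Longrightarrow> word_inv (word_inv w) = w"
  by (induction w) (auto simp: word_inv_def letter_inv_letter_inv)

lemma letter_mult_letter:
  "a \<noteq> 0 \<Longrightarrow> b \<noteq> 0 \<Longrightarrow> (a + b) mod q \<noteq> 0 \<Longrightarrow> letter a ** letter b \<simeq> letter ((a + b) mod q)"
  by (simp add: letter_def mpow_U_add_mod)

lemma letter_mult_letter_inv: "a < q \<Longrightarrow> letter a ** letter (letter_inv a) \<simeq> mat 1"
  using mpow_U_q by (auto simp: letter_def letter_inv_def S_mult_S mpow_add[symmetric])

lemma letter_inv_mult_letter: "a < q \<Longrightarrow> letter (letter_inv a) ** letter a \<simeq> mat 1"
  using mpow_U_q by (auto simp: letter_def letter_inv_def S_mult_S mpow_add[symmetric])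

lemma word_inv_mult_word: "\<forall>a\<in>set w. a < q \<Longrightarrow> word_mat (word_inv w) ** word_mat w \<simeq> mat 1"
proof (induction w)
  case (Cons a w)
  have "word_mat (word_inv (a # w)) ** word_mat (a # w) =
      word_mat (word_inv w) ** (letter (letter_inv a) ** letter a) ** word_mat w"
    by (simp add: word_inv_def word_mat_append matrix_mul_assoc)
  also have "\<dots> \<simeq> word_mat (word_inv w) ** mat 1 ** word_mat w"
    using Cons by (intro pm_eq_mult_right pm_eq_mult_left letter_inv_mult_letter) auto
  also have "\<dots> \<simeq> mat 1" using Cons by simp
  finally show ?case .
qed (simp add: word_inv_def)

lemma word_mult_word_inv: "\<forall>a\<in>set w. a < q \<Longrightarrow> word_mat w ** word_mat (word_inv w) \<simeq> mat 1"
  using word_inv_mult_word[of "word_inv w"] word_inv_word_inv[of w]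
  by (simp add: word_inv_def letter_inv_less)

lemma U_pow_maps_quadrant:
  assumes "0 < a" "a < q" "v$1 * v$2 > (0::real)"
  shows "(mpow (U_mat q) a *v v)$1 * (mpow (U_mat q) a *v v)$2 < 0"
proof -
  define s0 s1 s2
    where "s0 = sin_quot q (real a - 1)" "s1 = sin_quot q a" "s2 = sin_quot q (real a + 1)"
  have s: "s0 \<ge> 0" "s1 > 0" "s2 \<ge> 0"
    unfolding s0_s1_s2_def using assms
    by (auto intro!: sin_quot_nonneg sin_quot_pos)
  have U: "(mpow (U_mat q) a *v v)$1 = - (s0 * v$1 + s1 * v$2)"
    "(mpow (U_mat q) a *v v)$2 = s1 * v$1 + s2 * v$2"
    by (simp_all add: matrix_vector_mult_2 mpow_U s0_s1_s2_def)
  have "v$1 > 0 \<and> v$2 > 0 \<or> v$1 < 0 \<and> v$2 < 0"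
    using assms(3) by (simp add: zero_less_mult_iff)
  then show ?thesis
  proof
    assume "v$1 > 0 \<and> v$2 > 0"
    then have "s0 * v$1 + s1 * v$2 > 0" "s1 * v$1 + s2 * v$2 > 0"
      using s by (simp_all add: add_nonneg_pos add_pos_nonneg)
    then show ?thesis unfolding U by (simp add: mult_neg_pos)
  next
    assume "v$1 < 0 \<and> v$2 < 0"
    then have "s0 * v$1 + s1 * v$2 < 0" "s1 * v$1 + s2 * v$2 < 0"
      using s by (simp_all add: add_nonpos_neg add_neg_nonpos mult_nonneg_nonpos mult_pos_neg)
    then show ?thesis unfolding U by (simp add: mult_pos_neg)
  qed
qed

lemma S_maps_quadrant: "v$1 * v$2 < (0::real) \<Longrightarrow> (S_mat *v v)$1 * (S_mat *v v)$2 > 0"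
  by (simp add: matrix_vector_mult_2 S_mat_def mult.commute)

lemma reduced_word_maps_quadrant:
  "reduced w \<Longrightarrow> w \<noteq> [] \<Longrightarrow> hd w \<noteq> 0 \<Longrightarrow> last w \<noteq> 0 \<Longrightarrow> v$1 * v$2 > (0::real)
   \<Longrightarrow> (word_mat w *v v)$1 * (word_mat w *v v)$2 < 0"
proof (induction "length w" arbitrary: w rule: less_induct)
  case less
  then obtain a r where w: "w = a # r" by (cases w) auto
  have a: "a \<noteq> 0" "a < q" using less.prems w by (auto simp: reduced_def)
  show ?case
  proof (cases r)
    case Nil
    then show ?thesis using w a U_pow_maps_quadrant less.prems by (simp add: letter_def)
  next
    case (Cons b r')
    have "b = 0" using less.prems w Cons a by (auto simp: reduced_def)
    then have "r' \<noteq> []" using less.prems w Cons by auto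
    then have "hd r' \<noteq> 0" "last r' \<noteq> 0" "reduced r'"
      using less.prems w Cons \<open>b = 0\<close> by (auto simp: reduced_Cons)
    then have "(word_mat r' *v v)$1 * (word_mat r' *v v)$2 < 0"
      using less.hyps \<open>r' \<noteq> []\<close> less.prems(5) w Cons by auto
    moreover have "word_mat w *v v = mpow (U_mat q) a *v (S_mat *v (word_mat r' *v v))"
      using w Cons \<open>b = 0\<close> a by (simp add: letter_def matrix_vector_mul_assoc)
    ultimately show ?thesis using U_pow_maps_quadrant[OF _ a(2) S_maps_quadrant] a by simp
  qed
qed

lemma reduced_word_U_ends_not_id:
  assumes "reduced w" "w \<noteq> []" "hd w \<noteq> 0" "last w \<noteq> 0"
  shows "\<not> word_mat w \<simeq> mat 1"
proof
  assume "word_mat w \<simeq> mat 1"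
  define v :: "real^2" where "v = vector [1, 1]"
  then have "(word_mat w *v v)$1 * (word_mat w *v v)$2 = 1"
    using \<open>word_mat w \<simeq> mat 1\<close> by (auto simp: pm_eq_def matrix_vector_mult_2 mat_def)
  moreover have "(word_mat w *v v)$1 * (word_mat w *v v)$2 < 0"
    using reduced_word_maps_quadrant[OF assms] by (simp add: v_def)
  ultimately show False by simp
qed

text \<open>Conjugating by a \<open>U\<close>-letter \<open>b \<noteq> c\<close> produces a word with \<open>U\<close>-letters at both ends.\<close>
lemma reduced_word_S_U_not_id:
  assumes "reduced w" "w \<noteq> []" "hd w = 0" "last w \<noteq> 0"
  shows "\<not> word_mat w \<simeq> mat 1"
proof
  assume id: "word_mat w \<simeq> mat 1"
  define p c where "p = butlast w" and "c = last w"
  have w: "w = p @ [c]" using assms by (simp add: p_def c_def)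
  have p: "p \<noteq> []" "hd p = 0" "reduced p" "last p = 0" "c \<noteq> 0" "c < q"
    using assms unfolding w by (cases p; auto simp: reduced_append reduced_Cons c_def)+
  define b where "b = (if c = 1 then 2 else (1::nat))"
  have b: "b \<noteq> 0" "b < q" "b \<noteq> c" "letter_inv b \<noteq> 0" "letter_inv b = q - b"
    using q_ge_3 by (auto simp: b_def letter_inv_def)
  define c' where "c' = (c + letter_inv b) mod q"
  have "c' \<noteq> 0" unfolding c'_def b(5) using b p by (intro mod_neq_0) auto
  then have c': "c' \<noteq> 0" "c' < q" using q_ge_3 by (simp_all add: c'_def)
  have "word_mat (b # p @ [c']) = letter b ** word_mat p ** letter c'"
    by (simp add: word_mat_append matrix_mul_assoc)
  also have "\<dots> \<simeq> letter b ** word_mat p ** (letter c ** letter (letter_inv b))"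
    using letter_mult_letter[OF p(5) b(4)] c'(1) unfolding c'_def
    by (intro pm_eq_mult_left) (simp add: pm_eq_sym)
  also have "\<dots> = letter b ** word_mat w ** letter (letter_inv b)"
    by (simp add: w word_mat_append matrix_mul_assoc)
  also have "\<dots> \<simeq> letter b ** mat 1 ** letter (letter_inv b)"
    by (intro pm_eq_mult_right pm_eq_mult_left id)
  also have "\<dots> \<simeq> mat 1" using letter_mult_letter_inv[OF b(2)] by simp
  finally have "word_mat (b # p @ [c']) \<simeq> mat 1" .
  moreover have "reduced (b # p @ [c'])"
    unfolding reduced_Cons_snoc using p b c' by auto
  ultimately show False using reduced_word_U_ends_not_id b c' by fastforce
qed

lemma reduced_word_S_ends_not_id:
  assumes "reduced w" "w \<noteq> []" "hd w = 0" "last w = 0"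
  shows "\<not> word_mat w \<simeq> mat 1"
proof
  assume id: "word_mat w \<simeq> mat 1"
  show False
  proof (cases "w = [0]")
    case True
    then show False
      using id
      by (simp add: letter_def pm_eq_def S_mat_def mat2_one mat2_mult mat2_uminus mat2_inject)
  next
    case False
    then obtain m where w: "w = 0 # m @ [0]"
      using assms by (cases w; cases "tl w" rule: rev_cases) (auto simp: reduced_Cons)
    then have m: "reduced m" "m \<noteq> []" "hd m \<noteq> 0" "last m \<noteq> 0"
      using assms(1) by (auto simp: reduced_Cons_snoc)
    have "word_mat m \<simeq> (S_mat ** S_mat) ** word_mat m ** (S_mat ** S_mat)"
      by (simp add: S_mult_S matrix_mul_minus_left matrix_mul_minus_right)
    also have "\<dots> = S_mat ** word_mat w ** S_mat"
      using w by (simp add: word_mat_append matrix_mul_assoc letter_def)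
    also have "\<dots> \<simeq> S_mat ** mat 1 ** S_mat" by (intro pm_eq_mult_right pm_eq_mult_left id)
    also have "\<dots> \<simeq> mat 1" by (simp add: S_mult_S)
    finally show False using reduced_word_U_ends_not_id[OF m] by blast
  qed
qed

lemma reduced_word_id_imp_Nil:
  assumes "reduced w" "word_mat w \<simeq> mat 1"
  shows "w = []"
proof (rule ccontr)
  assume "w \<noteq> []"
  consider "hd w \<noteq> 0" "last w \<noteq> 0" | "hd w = 0" "last w = 0" | "hd w = 0" "last w \<noteq> 0"
    | "hd w \<noteq> 0" "last w = 0" by blast
  then show False
  proof cases
    case 4
    have wq: "\<forall>a\<in>set w. a < q" using assms by (simp add: reduced_def)
    have "word_mat (word_inv w) \<simeq> word_mat (word_inv w) ** word_mat w"
      using pm_eq_mult_left[OF assms(2), of "word_mat (word_inv w)"] by (simp add: pm_eq_sym)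
    also have "\<dots> \<simeq> mat 1" using word_inv_mult_word[OF wq] .
    finally have "word_mat (word_inv w) \<simeq> mat 1" .
    moreover have "letter_inv (hd w) \<noteq> 0" using 4 wq \<open>w \<noteq> []\<close> by (simp add: letter_inv_eq_0_iff)
    then have "hd (word_inv w) = 0" "last (word_inv w) \<noteq> 0" "word_inv w \<noteq> []"
      using 4 \<open>w \<noteq> []\<close> by (auto simp: word_inv_def hd_rev last_rev hd_map last_map letter_inv_def)
    ultimately show False using reduced_word_S_U_not_id[OF reduced_word_inv[OF assms(1)]] by blast
  qed (use assms \<open>w \<noteq> []\<close> reduced_word_U_ends_not_id reduced_word_S_ends_not_id
      reduced_word_S_U_not_id in blast)+
qed

lemma merge_U_letters:
  assumes x: "reduced (x @ [b])" and y: "reduced (a # y)"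
    and ab: "a \<noteq> 0" "b \<noteq> 0" "(b + a) mod q \<noteq> 0"
  shows "reduced (x @ ((b + a) mod q) # y)"
    "word_mat (x @ ((b + a) mod q) # y) \<simeq> word_mat (x @ b # a # y)"
proof -
  have "x \<noteq> [] \<Longrightarrow> last x = 0" "y \<noteq> [] \<Longrightarrow> hd y = 0"
    using x y ab by (auto simp: reduced_append reduced_Cons)
  then show "reduced (x @ ((b + a) mod q) # y)"
    using x y ab q_ge_3 by (auto simp: reduced_append reduced_Cons)
  have "word_mat (x @ ((b + a) mod q) # y) = word_mat x ** letter ((b + a) mod q) ** word_mat y"
    by (simp add: word_mat_append matrix_mul_assoc)
  also have "\<dots> \<simeq> word_mat x ** (letter b ** letter a) ** word_mat y"
    by (intro pm_eq_mult_left pm_eq_mult_right pm_eq_sym[OF letter_mult_letter[OF ab(2,1,3)]])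
  also have "\<dots> = word_mat (x @ b # a # y)"
    by (simp add: word_mat_append matrix_mul_assoc)
  finally show "word_mat (x @ ((b + a) mod q) # y) \<simeq> word_mat (x @ b # a # y)" .
qed

text \<open>Otherwise the word for \<open>(b # B)\<^sup>-\<^sup>1 (a # A)\<close>, after merging two \<open>U\<close>-letters if necessary,
  is a nonempty reduced word representing the identity.\<close>
lemma reduced_words_pm_eq_hd_eq:
  assumes A: "reduced (a # A)" and B: "reduced (b # B)"
    and eq: "word_mat (a # A) \<simeq> word_mat (b # B)"
  shows "a = b"
proof (rule ccontr)
  assume "a \<noteq> b"
  have "word_mat (word_inv (b # B) @ a # A) = word_mat (word_inv (b # B)) ** word_mat (a # A)"
    by (simp add: word_mat_append)
  also have "\<dots> \<simeq> word_mat (word_inv (b # B)) ** word_mat (b # B)"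
    by (intro pm_eq_mult_left eq)
  also have "\<dots> \<simeq> mat 1"
    using B by (intro word_inv_mult_word) (simp add: reduced_def)
  finally have id: "word_mat (word_inv B @ letter_inv b # a # A) \<simeq> mat 1"
    by (simp add: word_inv_def)
  have inv: "reduced (word_inv B @ [letter_inv b])" "b < q"
    using reduced_word_inv[OF B] B by (simp_all add: word_inv_def reduced_Cons)
  show False
  proof (cases "(a = 0) = (b = 0)")
    case False
    then have "reduced (word_inv B @ letter_inv b # a # A)"
      using A inv by (simp add: reduced_append reduced_Cons letter_inv_eq_0_iff)
    then show False using reduced_word_id_imp_Nil[OF _ id] by simp
  next
    case True
    then have nz: "a \<noteq> 0" "letter_inv b \<noteq> 0" "letter_inv b = q - b"
      using \<open>a \<noteq> b\<close> inv by (auto simp: letter_inv_def)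
    moreover have "(letter_inv b + a) mod q \<noteq> 0"
      unfolding nz(3) using nz A inv \<open>a \<noteq> b\<close> by (intro mod_neq_0) (auto simp: reduced_Cons)
    ultimately have "reduced (word_inv B @ ((letter_inv b + a) mod q) # A)"
      and "word_mat (word_inv B @ ((letter_inv b + a) mod q) # A) \<simeq> mat 1"
      using merge_U_letters[OF inv(1) A] pm_eq_trans[OF _ id] by auto
    then show False using reduced_word_id_imp_Nil by fastforce
  qed
qed

theorem reduced_word_mat_inj:
  "reduced A \<Longrightarrow> reduced B \<Longrightarrow> word_mat A \<simeq> word_mat B \<Longrightarrow> A = B"
proof (induction A arbitrary: B)
  case Nil
  then show ?case using reduced_word_id_imp_Nil[of B] pm_eq_sym[OF Nil.prems(3)] by simp
next
  case (Cons a A)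
  show ?case
  proof (cases B)
    case Nil
    then show ?thesis using reduced_word_id_imp_Nil[OF Cons.prems(1)] Cons.prems(3) by simp
  next
    case (Cons b B')
    then have "a = b" using reduced_words_pm_eq_hd_eq[of a A b B'] Cons.prems by simp
    have "a < q" "reduced A" "reduced B'" using Cons.prems Cons by (auto simp: reduced_Cons)
    have "letter a ** word_mat A \<simeq> letter a ** word_mat B'"
      using Cons.prems(3) unfolding Cons \<open>a = b\<close> by simp
    then have "word_mat A \<simeq> word_mat B'"
      by (rule pm_eq_cancel_left[OF letter_inv_mult_letter[OF \<open>a < q\<close>]])
    then have "A = B'" using Cons.IH \<open>reduced A\<close> \<open>reduced B'\<close> by blast
    then show ?thesis using Cons \<open>a = b\<close> by simp
  qed
qed

end

section \<open>Conjugacy of cyclically reduced words\<close>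

context hecke
begin

definition cyclically_reduced :: "nat list \<Rightarrow> bool" where
  "cyclically_reduced W \<longleftrightarrow> reduced W \<and> 2 \<le> length W \<and> (hd W = 0) \<noteq> (last W = 0)"

lemma cyclically_reduced_rotate1:
  assumes "cyclically_reduced W"
  shows "cyclically_reduced (rotate1 W)"
proof -
  obtain c t where W: "W = c # t"
    using assms by (cases W) (auto simp: cyclically_reduced_def)
  moreover have "t \<noteq> []" using assms W by (auto simp: cyclically_reduced_def)
  ultimately show ?thesis
    using assms by (auto simp: cyclically_reduced_def reduced_append reduced_Cons)
qed

lemma cyclically_reduced_rotate: "cyclically_reduced W \<Longrightarrow> cyclically_reduced (rotate n W)"
  by (induction n) (simp_all add: cyclically_reduced_rotate1)

text \<open>Conjugating a word with \<open>U\<close>-letters at both ends by a word ending in \<open>S\<close> gives a reduced word,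
  which has letters of the same type at both ends.\<close>
lemma conj_U_ends_not_cyclically_reduced:
  assumes x: "reduced x" "x = [] \<or> last x = 0"
    and V: "reduced V" "V \<noteq> []" "hd V \<noteq> 0" "last V \<noteq> 0"
    and W: "cyclically_reduced W" and conj: "word_mat x ** word_mat V \<simeq> word_mat W ** word_mat x"
  shows False
proof -
  have xq: "\<forall>a\<in>set x. a < q" using x by (simp add: reduced_def)
  have "x \<noteq> [] \<Longrightarrow> hd (word_inv x) = 0"
    using x by (auto simp: word_inv_def hd_rev letter_inv_def last_map)
  then have red: "reduced (x @ V @ word_inv x)"
    using x V reduced_word_inv[OF x(1)] by (auto simp: reduced_append word_inv_def)
  have "word_mat (x @ V @ word_inv x) = (word_mat x ** word_mat V) ** word_mat (word_inv x)"
    by (simp add: word_mat_append matrix_mul_assoc)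
  also have "\<dots> \<simeq> (word_mat W ** word_mat x) ** word_mat (word_inv x)"
    by (rule pm_eq_mult_right[OF conj])
  also have "\<dots> = word_mat W ** (word_mat x ** word_mat (word_inv x))"
    by (simp add: matrix_mul_assoc)
  also have "\<dots> \<simeq> word_mat W ** mat 1"
    by (intro pm_eq_mult_left word_mult_word_inv[OF xq])
  finally have "x @ V @ word_inv x = W"
    using reduced_word_mat_inj red W by (auto simp: cyclically_reduced_def)
  moreover have "(letter_inv (hd x) = 0) = (hd x = 0)" if "x \<noteq> []"
    using xq that by (simp add: letter_inv_eq_0_iff)
  ultimately show False
    using V W by (cases "x = []") (auto simp: cyclically_reduced_def word_inv_def last_rev hd_map)
qed

lemma conj_cancel_last_letter:
  assumes "letter s ** word_mat W \<simeq> word_mat V ** letter s" "s < q"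
    and "word_mat (x @ [s]) ** word_mat W \<simeq> word_mat W' ** word_mat (x @ [s])"
  shows "word_mat x ** word_mat V \<simeq> word_mat W' ** word_mat x"
proof (rule pm_eq_cancel_right[OF letter_mult_letter_inv[OF assms(2)]])
  have "(word_mat x ** word_mat V) ** letter s = word_mat x ** (word_mat V ** letter s)"
    by (simp add: matrix_mul_assoc)
  also have "\<dots> \<simeq> word_mat x ** (letter s ** word_mat W)"
    by (intro pm_eq_mult_left pm_eq_sym[OF assms(1)])
  also have "\<dots> = word_mat (x @ [s]) ** word_mat W"
    by (simp add: word_mat_append matrix_mul_assoc)
  also have "\<dots> \<simeq> word_mat W' ** word_mat (x @ [s])"
    by (rule assms(3))
  also have "\<dots> = (word_mat W' ** word_mat x) ** letter s"
    by (simp add: word_mat_append matrix_mul_assoc)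
  finally show "(word_mat x ** word_mat V) ** letter s \<simeq> (word_mat W' ** word_mat x) ** letter s" .
qed

lemma conj_letter_rotate:
  assumes W: "cyclically_reduced W" and s: "s = letter_inv (hd W) \<or> s = last W"
  shows "\<exists>r. letter s ** word_mat W \<simeq> word_mat (rotate r W) ** letter s"
  using s
proof
  assume s: "s = letter_inv (hd W)"
  obtain c t where W: "W = c # t" "c < q"
    using W by (cases W) (auto simp: cyclically_reduced_def reduced_def)
  have "letter s ** word_mat W = (letter (letter_inv c) ** letter c) ** word_mat t"
    using s W by (simp add: matrix_mul_assoc)
  also have "\<dots> \<simeq> mat 1 ** word_mat t" by (intro pm_eq_mult_right letter_inv_mult_letter W)
  also have "\<dots> \<simeq> word_mat t ** (letter c ** letter (letter_inv c))"
    using pm_eq_mult_left[OF letter_mult_letter_inv[OF W(2)], of "word_mat t"]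
    by (simp add: pm_eq_sym)
  also have "\<dots> = word_mat (rotate 1 W) ** letter s"
    using s W by (simp add: word_mat_append matrix_mul_assoc)
  finally show ?thesis by blast
next
  assume s: "s = last W"
  obtain m where W: "W = m @ [s]"
    using W s by (cases W rule: rev_cases) (auto simp: cyclically_reduced_def)
  then have "letter s ** word_mat W = word_mat (rotate (length m) W) ** letter s"
    by (simp add: rotate_append word_mat_append matrix_mul_assoc)
  then show ?thesis by (metis pm_eq_refl)
qed

lemma conj_U_letter_merge_hd:
  assumes red: "reduced (c # m @ [d])" and cd: "c \<noteq> 0" "d = 0" and s: "s \<noteq> 0" "s < q" "s \<noteq> letter_inv c"
  shows "\<exists>V. reduced V \<and> V \<noteq> [] \<and> hd V \<noteq> 0 \<and> last V \<noteq> 0 \<and>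
    letter s ** word_mat (c # m @ [d]) \<simeq> word_mat V ** letter s"
proof -
  define e where "e = (s + c) mod q"
  have "e \<noteq> 0" unfolding e_def using s cd red
    by (intro mod_neq_0) (auto simp: letter_inv_def reduced_Cons)
  then have e: "e \<noteq> 0" "e < q" using q_ge_3 by (simp_all add: e_def)
  have ls: "letter_inv s \<noteq> 0" "letter_inv s < q"
    using s by (simp_all add: letter_inv_eq_0_iff letter_inv_less)
  have "letter s ** word_mat (c # m @ [d]) = (letter s ** letter c) ** word_mat (m @ [d])"
    by (simp add: matrix_mul_assoc)
  also have "\<dots> \<simeq> letter e ** word_mat (m @ [d])"
    using letter_mult_letter s cd e unfolding e_def by (intro pm_eq_mult_right) auto
  also have "\<dots> \<simeq> (letter e ** word_mat (m @ [d])) ** (letter (letter_inv s) ** letter s)"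
    using pm_eq_mult_left[OF letter_inv_mult_letter[OF s(2)], of "letter e ** word_mat (m @ [d])"]
    by (simp add: pm_eq_sym)
  also have "\<dots> = word_mat (e # (m @ [d]) @ [letter_inv s]) ** letter s"
    by (simp add: word_mat_append matrix_mul_assoc)
  moreover have "reduced (e # (m @ [d]) @ [letter_inv s])"
  proof -
    have "reduced (m @ [d])" "hd (m @ [d]) = 0" using red cd by (auto simp: reduced_Cons)
    then show ?thesis using e ls cd by (subst reduced_Cons_snoc) auto
  qed
  ultimately show ?thesis using e ls by (intro exI[of _ "e # (m @ [d]) @ [letter_inv s]"]) auto
qed

lemma conj_U_letter_merge_last:
  assumes red: "reduced (c # m @ [d])" and cd: "c = 0" "d \<noteq> 0" and s: "s \<noteq> 0" "s < q" "s \<noteq> d"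
  shows "\<exists>V. reduced V \<and> V \<noteq> [] \<and> hd V \<noteq> 0 \<and> last V \<noteq> 0 \<and>
    letter s ** word_mat (c # m @ [d]) \<simeq> word_mat V ** letter s"
proof -
  have "d < q" using red by (simp add: reduced_Cons_snoc)
  define e where "e = (d + letter_inv s) mod q"
  have ls: "letter_inv s = q - s" using s by (simp add: letter_inv_def)
  have "e \<noteq> 0" unfolding e_def ls using s cd \<open>d < q\<close> by (intro mod_neq_0) auto
  then have e: "e \<noteq> 0" "e < q" using q_ge_3 by (simp_all add: e_def)
  have "(e + s) mod q = d"
    using s \<open>d < q\<close> unfolding e_def ls by (simp add: mod_add_left_eq)
  then have "letter e ** letter s \<simeq> letter d"
    using letter_mult_letter[of e s] e s cd by simp
  have "word_mat (s # (c # m) @ [e]) ** letter s =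
      letter s ** word_mat (c # m) ** (letter e ** letter s)"
    by (simp add: word_mat_append matrix_mul_assoc)
  also have "\<dots> \<simeq> letter s ** word_mat (c # m) ** letter d"
    by (intro pm_eq_mult_left \<open>letter e ** letter s \<simeq> letter d\<close>)
  also have "\<dots> = letter s ** word_mat (c # m @ [d])"
    by (simp add: word_mat_append matrix_mul_assoc)
  finally have "letter s ** word_mat (c # m @ [d]) \<simeq> word_mat (s # (c # m) @ [e]) ** letter s"
    by (simp add: pm_eq_sym)
  moreover have "reduced (s # (c # m) @ [e])"
  proof -
    have "reduced (c # m)" "last (c # m) = 0"
      using red cd by (auto simp: reduced_append reduced_Cons)
    then show ?thesis using e s cd by (subst reduced_Cons_snoc) auto
  qed
  ultimately show ?thesis using e s by (intro exI[of _ "s # (c # m) @ [e]"]) auto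
qed

lemma conj_letter_U_ends:
  assumes W: "cyclically_reduced W" and s: "s < q" "s \<noteq> letter_inv (hd W)" "s \<noteq> last W"
  shows "s \<noteq> 0 \<and> (\<exists>V. reduced V \<and> V \<noteq> [] \<and> hd V \<noteq> 0 \<and> last V \<noteq> 0 \<and>
           letter s ** word_mat W \<simeq> word_mat V ** letter s)"
proof -
  obtain c m d where W': "W = c # m @ [d]"
    using W by (cases W; cases "tl W" rule: rev_cases) (auto simp: cyclically_reduced_def)
  have red: "reduced (c # m @ [d])" and cd: "(c = 0) \<noteq> (d = 0)"
    using W by (auto simp: W' cyclically_reduced_def)
  have "s \<noteq> 0" using s cd by (auto simp: W' letter_inv_def)
  then show ?thesis
    using conj_U_letter_merge_hd[OF red] conj_U_letter_merge_last[OF red] cd s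
    by (cases "c = 0") (auto simp: W')
qed

text \<open>Induction on the conjugating word: its last letter either cancels against an end of \<open>W\<close>,
  which rotates \<open>W\<close>, or merges with it, which would produce a conjugate that is not cyclically
  reduced.\<close>
theorem conj_cyclically_reduced_rotate:
  "reduced x \<Longrightarrow> cyclically_reduced W \<Longrightarrow> cyclically_reduced W' \<Longrightarrow>
   word_mat x ** word_mat W \<simeq> word_mat W' ** word_mat x \<Longrightarrow> \<exists>r. W' = rotate r W"
proof (induction x arbitrary: W rule: rev_induct)
  case Nil
  then have "W = W'" using reduced_word_mat_inj by (auto simp: cyclically_reduced_def)
  then show ?case by (metis rotate0 id_apply)
next
  case (snoc s x)
  have x: "reduced x" "s < q" "x \<noteq> [] \<Longrightarrow> (last x = 0) \<noteq> (s = 0)"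
    using snoc.prems(1) by (auto simp: reduced_append reduced_Cons)
  show ?case
  proof (cases "s = letter_inv (hd W) \<or> s = last W")
    case True
    then obtain r where "letter s ** word_mat W \<simeq> word_mat (rotate r W) ** letter s"
      using conj_letter_rotate snoc.prems(2) by blast
    then have "word_mat x ** word_mat (rotate r W) \<simeq> word_mat W' ** word_mat x"
      using conj_cancel_last_letter x(2) snoc.prems(4) by blast
    then obtain r' where "W' = rotate r' (rotate r W)"
      using snoc.IH x(1) cyclically_reduced_rotate snoc.prems(2,3) by blast
    then show ?thesis by (metis rotate_rotate)
  next
    case False
    then obtain V where "s \<noteq> 0" "reduced V" "V \<noteq> []" "hd V \<noteq> 0" "last V \<noteq> 0"
      and "letter s ** word_mat W \<simeq> word_mat V ** letter s"
      using conj_letter_U_ends snoc.prems(2) x(2) by blast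
    moreover have "x = [] \<or> last x = 0" using x(3) \<open>s \<noteq> 0\<close> by (cases "x = []") auto
    ultimately show ?thesis
      using conj_U_ends_not_cyclically_reduced[OF x(1)] conj_cancel_last_letter x(2)
        snoc.prems(3,4) by blast
  qed
qed

end

section \<open>Elements of the Hecke group as reduced words\<close>

lemma hecke_group_invertible: "A \<in> hecke_group q \<Longrightarrow> invertible A"
proof (induction rule: hecke_group.induct)
  case id
  then show ?case unfolding invertible_def by (intro exI[of _ "mat 1"]) simp
next
  case (mS A)
  have "invertible S_mat" unfolding invertible_def
    by (intro exI[of _ "- S_mat"]) (simp add: matrix_mul_minus_left matrix_mul_minus_right S_mult_S)
  then show ?case using mS invertible_mult by blast
next
  case (mSi A)
  have "invertible (- S_mat)" unfolding invertible_def
    by (intro exI[of _ "S_mat"]) (simp add: matrix_mul_minus_left matrix_mul_minus_right S_mult_S)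
  then show ?case using mSi invertible_mult matrix_inv_S by metis
next
  case (mT A)
  have "invertible (T_mat q)" unfolding invertible_def
    by (intro exI[of _ "T_inv_mat q"]) (simp add: T_mult_T_inv)
  then show ?case using mT invertible_mult by blast
next
  case (mTi A)
  have "invertible (T_inv_mat q)" unfolding invertible_def
    by (intro exI[of _ "T_mat q"]) (simp add: T_mult_T_inv)
  then show ?case using mTi invertible_mult matrix_inv_T by metis
qed

lemma hecke_group_mult: "A \<in> hecke_group q \<Longrightarrow> B \<in> hecke_group q \<Longrightarrow> A ** B \<in> hecke_group q"
  by (induction rule: hecke_group.induct)
    (simp_all add: matrix_mul_assoc[symmetric] hecke_group.intros)

lemma S_in_hecke_group: "S_mat \<in> hecke_group q"
  using hecke_group.mS[OF hecke_group.id] by simp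

lemma T_pow_in_hecke_group: "T_pow q n \<in> hecke_group q"
proof -
  have "T_mat q \<in> hecke_group q" "T_inv_mat q \<in> hecke_group q"
    using hecke_group.mT[OF hecke_group.id] hecke_group.mTi[OF hecke_group.id, of q]
    by (simp_all add: matrix_inv_T)
  moreover have "mpow A k \<in> hecke_group q" if "A \<in> hecke_group q" for A k
    using that by (induction k) (auto intro: hecke_group_mult hecke_group.id)
  ultimately show ?thesis by (simp add: T_pow_def)
qed

lemma hecke_word_in_hecke_group: "hecke_word q ns \<in> hecke_group q"
  by (induction ns)
    (auto intro!: hecke_group_mult S_in_hecke_group T_pow_in_hecke_group hecke_group.id)

lemma hecke_word_append: "hecke_word q (xs @ ys) = hecke_word q xs ** hecke_word q ys"
  by (induction xs) (simp_all add: matrix_mul_assoc[symmetric])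

context hecke
begin

definition S_times :: "nat list \<Rightarrow> nat list" where
  "S_times w = (case w of [] \<Rightarrow> [0] | a # r \<Rightarrow> if a = 0 then r else 0 # a # r)"

definition U_pow_times :: "nat \<Rightarrow> nat list \<Rightarrow> nat list" where
  "U_pow_times a w = (case w of [] \<Rightarrow> [a] | b # r \<Rightarrow> if b = 0 then a # b # r
      else if (a + b) mod q = 0 then r else ((a + b) mod q) # r)"

lemma S_times_correct:
  assumes "reduced w"
  shows "reduced (S_times w)" "word_mat (S_times w) \<simeq> S_mat ** word_mat w"
proof -
  have "S_mat ** word_mat (0 # r) = - word_mat r" for r
    by (simp add: letter_def matrix_mul_assoc S_mult_S matrix_mul_minus_left)
  then show "reduced (S_times w)" "word_mat (S_times w) \<simeq> S_mat ** word_mat w"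
    using assms q_ge_3
    by (auto simp: S_times_def reduced_Cons letter_def pm_eq_def split: list.split)
qed

lemma U_pow_times_correct:
  assumes "reduced w" "0 < a" "a < q"
  shows "reduced (U_pow_times a w)"
    "word_mat (U_pow_times a w) \<simeq> mpow (U_mat q) a ** word_mat w"
proof -
  have "reduced (U_pow_times a w) \<and> word_mat (U_pow_times a w) \<simeq> mpow (U_mat q) a ** word_mat w"
  proof (cases w)
    case (Cons b r)
    show ?thesis
    proof (cases "b = 0")
      case False
      have merge: "mpow (U_mat q) a ** word_mat w \<simeq> mpow (U_mat q) ((a + b) mod q) ** word_mat r"
        using Cons False mpow_U_add_mod[of a b]
        by (simp add: letter_def matrix_mul_assoc pm_eq_mult_right)
      have "r \<noteq> [] \<Longrightarrow> hd r = 0" "reduced r"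
        using assms(1) Cons False by (auto simp: reduced_Cons)
      then show ?thesis
        using merge Cons False q_ge_3
        by (auto simp: U_pow_times_def reduced_Cons letter_def pm_eq_sym)
    qed (use Cons assms in \<open>simp add: U_pow_times_def reduced_Cons letter_def\<close>)
  qed (use assms in \<open>simp add: U_pow_times_def letter_def reduced_Cons\<close>)
  then show "reduced (U_pow_times a w)"
    "word_mat (U_pow_times a w) \<simeq> mpow (U_mat q) a ** word_mat w"
    by blast+
qed

lemma hecke_group_reduced_word: "A \<in> hecke_group q \<Longrightarrow> \<exists>w. reduced w \<and> A \<simeq> word_mat w"
proof (induction rule: hecke_group.induct)
  case id
  then show ?case by (intro exI[of _ "[]"]) simp
next
  case (mS A)
  then obtain w where w: "reduced w" "A \<simeq> word_mat w" by blast
  then have "S_mat ** A \<simeq> word_mat (S_times w)"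
    using S_times_correct(2)[OF w(1)] pm_eq_mult_left[OF w(2), of S_mat]
    by (meson pm_eq_sym pm_eq_trans)
  then show ?case using S_times_correct(1)[OF w(1)] by blast
next
  case (mSi A)
  then obtain w where w: "reduced w" "A \<simeq> word_mat w" by blast
  then have "matrix_inv S_mat ** A \<simeq> word_mat (S_times w)"
    using S_times_correct(2)[OF w(1)] pm_eq_mult_left[OF w(2), of S_mat] unfolding matrix_inv_S
    by (simp add: matrix_mul_minus_left) (meson pm_eq_sym pm_eq_trans)
  then show ?case using S_times_correct(1)[OF w(1)] by blast
next
  case (mT A)
  then obtain w where w: "reduced w" "A \<simeq> word_mat w" by blast
  have U_exp: "0 < (1::nat)" "1 < q" using q_ge_3 by auto
  have "T_mat q ** A \<simeq> S_mat ** (mpow (U_mat q) 1 ** word_mat w)"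
    using pm_eq_mult[OF T_pm_eq w(2)] by (simp add: matrix_mul_assoc)
  also have "\<dots> \<simeq> S_mat ** word_mat (U_pow_times 1 w)"
    by (intro pm_eq_mult_left pm_eq_sym[OF U_pow_times_correct(2)[OF w(1) U_exp]])
  also have "\<dots> \<simeq> word_mat (S_times (U_pow_times 1 w))"
    by (intro pm_eq_sym[OF S_times_correct(2)] U_pow_times_correct(1)[OF w(1) U_exp])
  finally show ?case using S_times_correct(1) U_pow_times_correct(1)[OF w(1) U_exp] by blast
next
  case (mTi A)
  then obtain w where w: "reduced w" "A \<simeq> word_mat w" by blast
  have U_exp: "0 < q - 1" "q - 1 < q" using q_ge_3 by auto
  have "matrix_inv (T_mat q) ** A \<simeq> mpow (U_mat q) (q - 1) ** (S_mat ** word_mat w)"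
    using pm_eq_mult[OF T_inv_pm_eq w(2)] by (simp add: matrix_inv_T matrix_mul_assoc)
  also have "\<dots> \<simeq> mpow (U_mat q) (q - 1) ** word_mat (S_times w)"
    by (intro pm_eq_mult_left pm_eq_sym[OF S_times_correct(2)] w(1))
  also have "\<dots> \<simeq> word_mat (U_pow_times (q - 1) (S_times w))"
    by (intro pm_eq_sym[OF U_pow_times_correct(2)] S_times_correct(1) w(1) U_exp)
  finally show ?case using U_pow_times_correct(1)[OF S_times_correct(1)[OF w(1)] U_exp] by blast
qed

end

section \<open>The letters of a Hecke word\<close>

text \<open>Up to sign, \<open>S T\<^sup>n = U S U \<dots> S U\<close> (with \<open>n\<close> letters \<open>U\<close>) for \<open>n > 0\<close>, and
  \<open>S T\<^sup>n = S (U\<^sup>-\<^sup>1 S \<dots> S U\<^sup>-\<^sup>1) S\<close> (with \<open>-n\<close> letters \<open>U\<^sup>-\<^sup>1\<close>) for \<open>n < 0\<close>. Letters are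
  encoded as integers: \<open>1\<close> for \<open>U\<close>, \<open>-1\<close> for \<open>U\<^sup>-\<^sup>1\<close> and \<open>0\<close> for \<open>S\<close>. In \<open>hecke_letters p ns\<close>
  the outer factors \<open>S\<close> cancel between consecutive entries of the same sign and a single \<open>S\<close>
  remains at each sign change; \<open>p\<close> is the entry preceding \<open>ns\<close>, so the whole word is conjugated
  by \<open>S\<close> when \<open>p < 0\<close>.\<close>

definition unit_sign :: "int \<Rightarrow> int" where
  "unit_sign n = (if 0 < n then 1 else -1)"

fun zigzag :: "int \<Rightarrow> nat \<Rightarrow> int list" where
  "zigzag X 0 = [X]"
| "zigzag X (Suc k) = X # 0 # zigzag X k"

definition T_letters :: "int \<Rightarrow> int list" where
  "T_letters n = zigzag (unit_sign n) (nat \<bar>n\<bar> - 1)"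

definition sign_change :: "int \<Rightarrow> int \<Rightarrow> int list" where
  "sign_change p n = (if (0 < p) = (0 < n) then [] else [0])"

fun hecke_letters :: "int \<Rightarrow> int list \<Rightarrow> int list" where
  "hecke_letters p [] = []"
| "hecke_letters p (n # r) = sign_change p n @ T_letters n @ hecke_letters n r"

definition cyclic_letters :: "int list \<Rightarrow> int list" where
  "cyclic_letters ns = hecke_letters (last ns) ns"

lemma S_mult_S_mult: "S_mat ** (S_mat ** X) \<simeq> X"
  by (simp add: matrix_mul_assoc S_mult_S matrix_mul_minus_left)

context hecke
begin

definition signed_letter :: "int \<Rightarrow> mat2" where
  "signed_letter x = (if x = 0 then S_mat else if 0 < x then U_mat q else mpow (U_mat q) (q - 1))"

fun letters_mat :: "int list \<Rightarrow> mat2" where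
  "letters_mat [] = mat 1"
| "letters_mat (x # r) = signed_letter x ** letters_mat r"

definition sign_twist :: "int \<Rightarrow> mat2" where
  "sign_twist p = (if 0 < p then mat 1 else S_mat)"

lemma letters_mat_append: "letters_mat (xs @ ys) = letters_mat xs ** letters_mat ys"
  by (induction xs) (simp_all add: matrix_mul_assoc)

lemma mpow_T_letters: "mpow (T_mat q) (Suc k) \<simeq> S_mat ** letters_mat (zigzag 1 k)"
proof (induction k)
  case 0
  then show ?case using T_pm_eq by (simp add: signed_letter_def)
next
  case (Suc k)
  have "mpow (T_mat q) (Suc (Suc k)) = T_mat q ** mpow (T_mat q) (Suc k)" by simp
  also have "\<dots> \<simeq> (S_mat ** U_mat q) ** (S_mat ** letters_mat (zigzag 1 k))"
    by (intro pm_eq_mult T_pm_eq Suc)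
  also have "\<dots> = S_mat ** letters_mat (zigzag 1 (Suc k))"
    by (simp add: signed_letter_def matrix_mul_assoc)
  finally show ?case .
qed

lemma mpow_T_inv_letters: "mpow (T_inv_mat q) (Suc k) \<simeq> letters_mat (zigzag (-1) k) ** S_mat"
proof (induction k)
  case 0
  then show ?case using T_inv_pm_eq by (simp add: signed_letter_def)
next
  case (Suc k)
  have "mpow (T_inv_mat q) (Suc (Suc k)) = T_inv_mat q ** mpow (T_inv_mat q) (Suc k)" by simp
  also have "\<dots> \<simeq> (mpow (U_mat q) (q - 1) ** S_mat) ** (letters_mat (zigzag (-1) k) ** S_mat)"
    by (intro pm_eq_mult T_inv_pm_eq Suc)
  also have "\<dots> = letters_mat (zigzag (-1) (Suc k)) ** S_mat"
    by (simp add: signed_letter_def matrix_mul_assoc)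
  finally show ?case .
qed

lemma S_T_pow_pos: "0 < n \<Longrightarrow> S_mat ** T_pow q n \<simeq> letters_mat (T_letters n)"
proof -
  assume "0 < n"
  then have "S_mat ** T_pow q n = S_mat ** mpow (T_mat q) (Suc (nat n - 1))"
    by (simp add: T_pow_def Suc_nat_eq_nat_zadd1)
  also have "\<dots> \<simeq> S_mat ** (S_mat ** letters_mat (zigzag 1 (nat n - 1)))"
    by (intro pm_eq_mult_left mpow_T_letters)
  also have "\<dots> \<simeq> letters_mat (zigzag 1 (nat n - 1))"
    by (rule S_mult_S_mult)
  finally show ?thesis using \<open>0 < n\<close> by (simp add: T_letters_def unit_sign_def)
qed

lemma S_T_pow_neg: "n < 0 \<Longrightarrow> S_mat ** T_pow q n \<simeq> S_mat ** letters_mat (T_letters n) ** S_mat"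
proof -
  assume "n < 0"
  then have "S_mat ** T_pow q n = S_mat ** mpow (T_inv_mat q) (Suc (nat (- n) - 1))"
    by (simp add: T_pow_def Suc_nat_eq_nat_zadd1)
  also have "\<dots> \<simeq> S_mat ** (letters_mat (zigzag (-1) (nat (- n) - 1)) ** S_mat)"
    by (intro pm_eq_mult_left mpow_T_inv_letters)
  finally show ?thesis using \<open>n < 0\<close> by (simp add: T_letters_def unit_sign_def matrix_mul_assoc)
qed

lemma S_T_pow_letters:
  assumes "n \<noteq> 0"
  shows "letters_mat (sign_change p n) ** letters_mat (T_letters n) ** sign_twist n
    \<simeq> sign_twist p ** (S_mat ** T_pow q n)"
proof (cases "0 < n")
  case True
  then have "S_mat ** T_pow q n \<simeq> letters_mat (T_letters n)" by (rule S_T_pow_pos)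
  moreover have "S_mat ** letters_mat (T_letters n) \<simeq> S_mat ** (S_mat ** T_pow q n)"
    using pm_eq_mult_left[OF calculation, of S_mat] by (rule pm_eq_sym)
  ultimately show ?thesis
    using True by (simp add: sign_change_def sign_twist_def signed_letter_def pm_eq_sym)
next
  case False
  then have "n < 0" using assms by simp
  then have ST: "S_mat ** T_pow q n \<simeq> S_mat ** letters_mat (T_letters n) ** S_mat"
    by (rule S_T_pow_neg)
  show ?thesis
  proof (cases "0 < p")
    case True
    then show ?thesis
      using ST \<open>n < 0\<close> by (simp add: sign_change_def sign_twist_def signed_letter_def pm_eq_sym)
  next
    case False
    have "S_mat ** (S_mat ** T_pow q n) \<simeq> (S_mat ** (S_mat ** letters_mat (T_letters n))) ** S_mat"
      using pm_eq_mult_left[OF ST, of S_mat] by (simp add: matrix_mul_assoc)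
    also have "\<dots> \<simeq> letters_mat (T_letters n) ** S_mat"
      by (intro pm_eq_mult_right S_mult_S_mult)
    finally show ?thesis using False \<open>n < 0\<close> by (simp add: sign_change_def sign_twist_def pm_eq_sym)
  qed
qed

lemma hecke_letters_mat:
  "\<forall>n\<in>set ns. n \<noteq> 0 \<Longrightarrow>
   letters_mat (hecke_letters p ns) \<simeq> sign_twist p ** hecke_word q ns ** sign_twist (last (p # ns))"
proof (induction ns arbitrary: p)
  case Nil
  then show ?case by (simp add: sign_twist_def S_mult_S pm_eq_def)
next
  case (Cons n r)
  let ?E = "sign_twist (last (n # r))"
  have "letters_mat (hecke_letters p (n # r)) =
      letters_mat (sign_change p n) ** letters_mat (T_letters n) ** letters_mat (hecke_letters n r)"
    by (simp add: letters_mat_append matrix_mul_assoc)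
  also have "\<dots> \<simeq> letters_mat (sign_change p n) ** letters_mat (T_letters n) **
      (sign_twist n ** hecke_word q r ** ?E)"
    using Cons by (intro pm_eq_mult_left) simp
  also have "\<dots> = (letters_mat (sign_change p n) ** letters_mat (T_letters n) ** sign_twist n) **
      hecke_word q r ** ?E"
    by (simp add: matrix_mul_assoc)
  also have "\<dots> \<simeq> (sign_twist p ** (S_mat ** T_pow q n)) ** hecke_word q r ** ?E"
    using Cons.prems by (intro pm_eq_mult_right S_T_pow_letters) simp
  also have "\<dots> = sign_twist p ** hecke_word q (n # r) ** sign_twist (last (p # n # r))"
    by (simp add: matrix_mul_assoc)
  finally show ?case .
qed

lemma cyclic_letters_mat:
  "ns \<noteq> [] \<Longrightarrow> \<forall>n\<in>set ns. n \<noteq> 0 \<Longrightarrow> 0 < last ns \<Longrightarrow>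
   letters_mat (cyclic_letters ns) \<simeq> hecke_word q ns"
  using hecke_letters_mat[of ns "last ns"] by (simp add: cyclic_letters_def sign_twist_def)

end

section \<open>Syllables\<close>

definition adjacent_ok :: "int \<Rightarrow> int \<Rightarrow> bool" where
  "adjacent_ok x y \<longleftrightarrow> \<not> (x = 0 \<and> y = 0) \<and> x * y \<noteq> -1"

fun well_formed :: "int list \<Rightarrow> bool" where
  "well_formed [] = True"
| "well_formed [x] = (x \<in> {-1, 0, 1})"
| "well_formed (x # y # r) = (x \<in> {-1, 0, 1} \<and> adjacent_ok x y \<and> well_formed (y # r))"

lemma well_formed_Cons:
  "well_formed (x # ys) \<longleftrightarrow> x \<in> {-1, 0, 1} \<and> well_formed ys \<and> (ys \<noteq> [] \<longrightarrow> adjacent_ok x (hd ys))"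
  by (cases ys) auto

lemma well_formed_append:
  "well_formed (xs @ ys) \<longleftrightarrow> well_formed xs \<and> well_formed ys \<and>
     (xs \<noteq> [] \<longrightarrow> ys \<noteq> [] \<longrightarrow> adjacent_ok (last xs) (hd ys))"
  by (induction xs) (auto simp: well_formed_Cons)

lemma hd_zigzag: "hd (zigzag X k) = X"
  by (cases k) auto

lemma zigzag_not_Nil: "zigzag X k \<noteq> []"
  by (cases k) auto

lemma last_zigzag: "last (zigzag X k) = X"
  by (induction k) (auto simp: zigzag_not_Nil)

lemma well_formed_zigzag: "X \<in> {-1, 1} \<Longrightarrow> well_formed (zigzag X k)"
  by (induction k) (auto simp: well_formed_Cons adjacent_ok_def hd_zigzag)

lemma unit_sign_cases: "unit_sign n \<in> {-1, 1}"
  by (simp add: unit_sign_def)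

lemma unit_sign_neq_0: "unit_sign n \<noteq> 0"
  by (simp add: unit_sign_def)

lemma hd_hecke_letters:
  "hd (hecke_letters p (n # r)) = (if (0 < p) = (0 < n) then unit_sign n else 0)"
  by (simp add: sign_change_def T_letters_def hd_zigzag zigzag_not_Nil)

lemma last_hecke_letters: "ns \<noteq> [] \<Longrightarrow> last (hecke_letters p ns) = unit_sign (last ns)"
proof (induction ns arbitrary: p)
  case (Cons n r)
  then show ?case by (cases r) (auto simp: T_letters_def last_zigzag zigzag_not_Nil)
qed simp

lemma hecke_letters_not_Nil: "ns \<noteq> [] \<Longrightarrow> hecke_letters p ns \<noteq> []"
  by (cases ns) (auto simp: T_letters_def zigzag_not_Nil)

lemma well_formed_hecke_letters: "\<forall>n\<in>set ns. n \<noteq> 0 \<Longrightarrow> well_formed (hecke_letters p ns)"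
proof (induction ns arbitrary: p)
  case (Cons n r)
  have "adjacent_ok (last (T_letters n)) (hd (hecke_letters n r))" if "r = m # r'" for m r'
    using that hd_hecke_letters[of n m r']
    by (auto simp del: hecke_letters.simps
        simp: T_letters_def last_zigzag adjacent_ok_def unit_sign_def)
  then have "well_formed (T_letters n @ hecke_letters n r)"
    using Cons well_formed_zigzag[OF unit_sign_cases] unfolding T_letters_def
    by (cases r) (auto simp: well_formed_append)
  then show ?case
    by (auto simp: well_formed_append sign_change_def T_letters_def hd_zigzag zigzag_not_Nil
        adjacent_ok_def unit_sign_def)
qed simp

text \<open>A syllable \<open>c \<noteq> 0\<close> stands for \<open>U\<^sup>c\<close> and is spelled as a run of \<open>|c|\<close> equal letters \<open>\<plusminus>1\<close>;
  the syllable \<open>0\<close> stands for \<open>S\<close>.\<close>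
definition syllable :: "int \<Rightarrow> int list" where
  "syllable c = (if c = 0 then [0] else replicate (nat \<bar>c\<bar>) (unit_sign c))"

lemma syllable_add_unit_sign: "c \<noteq> 0 \<Longrightarrow> syllable (c + unit_sign c) = unit_sign c # syllable c"
proof -
  assume "c \<noteq> 0"
  then have "nat \<bar>c + unit_sign c\<bar> = Suc (nat \<bar>c\<bar>)" "unit_sign (c + unit_sign c) = unit_sign c"
    by (auto simp: unit_sign_def)
  then show ?thesis using \<open>c \<noteq> 0\<close> by (simp add: syllable_def unit_sign_def)
qed

lemma syllable_unit: "x \<in> {-1, 0, 1} \<Longrightarrow> syllable x = [x]"
  by (auto simp: syllable_def unit_sign_def)

lemma syllable_decomposition:
  "well_formed L \<Longrightarrow> \<exists>S. concat (map syllable S) = L \<and> alternating S \<and>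
     (L \<noteq> [] \<longrightarrow> S \<noteq> [] \<and> (hd S = 0 \<longleftrightarrow> hd L = 0) \<and> (hd S \<noteq> 0 \<longrightarrow> unit_sign (hd S) = hd L))"
proof (induction L rule: well_formed.induct)
  case 1
  then show ?case by (intro exI[of _ "[]"]) simp
next
  case (2 x)
  then show ?case by (intro exI[of _ "[x]"]) (auto simp: syllable_unit unit_sign_def)
next
  case (3 x y r)
  then obtain S' where S': "concat (map syllable S') = y # r" "alternating S'" "S' \<noteq> []"
    "hd S' = 0 \<longleftrightarrow> y = 0" "hd S' \<noteq> 0 \<Longrightarrow> unit_sign (hd S') = y" by auto
  have x: "x \<in> {-1, 0, 1}" "adjacent_ok x y" "y \<in> {-1,0,1}" using 3 by (auto simp: well_formed_Cons)
  obtain c T where cT: "S' = c # T" using S'(3) by (cases S') auto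
  show ?case
  proof (cases "x = 0")
    case True
    then have "y \<noteq> 0" using x by (simp add: adjacent_ok_def)
    moreover have "syllable 0 = [0]" by (simp add: syllable_def)
    ultimately show ?thesis
      using S' True cT by (intro exI[of _ "0 # S'"]) (auto simp: alternating_Cons)
  next
    case False
    note x_nz = this
    show ?thesis
    proof (cases "y = 0")
      case True
      then show ?thesis
        using S' x_nz x cT
        by (intro exI[of _ "x # S'"]) (auto simp: syllable_unit alternating_Cons unit_sign_def)
    next
      case False
      have xy: "x = y" using x x_nz False by (auto simp: adjacent_ok_def)
      have c: "c \<noteq> 0" "unit_sign c = x" using S' cT False xy by auto
      have e: "syllable (c + x) = x # syllable c" using syllable_add_unit_sign[OF c(1)] c(2) by simp
      have cx: "c + x \<noteq> 0" using c by (auto simp: unit_sign_def split: if_splits)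
      have "concat (map syllable ((c + x) # T)) = x # y # r" using S'(1) cT e by simp
      moreover have "alternating ((c + x) # T)" using S'(2) cT c cx by (simp add: alternating_Cons)
      moreover have "unit_sign (c + x) = x" using c by (auto simp: unit_sign_def split: if_splits)
      ultimately show ?thesis using cx x_nz by (intro exI[of _ "(c + x) # T"]) auto
    qed
  qed
qed

lemma int_mod_eq_imp_eq: "\<bar>a - b\<bar> < n \<Longrightarrow> a mod n = b mod n \<Longrightarrow> a = (b::int)"
  using dvd_imp_le_int[of "a - b" n] by (cases "a = b") (auto simp: mod_eq_dvd_iff)

lemma diff_one_mult_mod: "k \<le> n \<Longrightarrow> ((n - 1) * k) mod n = (n - k) mod (n::nat)"
proof (cases k)
  case (Suc j)
  assume "k \<le> n"
  then have "(n - 1) * k = (n - k) + n * j"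
    using Suc by (simp add: algebra_simps diff_mult_distrib2)
  then show ?thesis by simp
qed simp

context hecke
begin

definition syllable_letter :: "int \<Rightarrow> nat" where
  "syllable_letter c = nat (c mod int q)"

lemma syllable_letter_less: "syllable_letter c < q"
  using q_ge_3 by (simp add: syllable_letter_def nat_less_iff)

lemma syllable_letter_inj:
  "2 * \<bar>c\<bar> < int q \<Longrightarrow> 2 * \<bar>c'\<bar> < int q \<Longrightarrow> syllable_letter c = syllable_letter c' \<Longrightarrow> c = c'"
  using q_ge_3
  by (intro int_mod_eq_imp_eq[of c c' "int q"]) (auto simp: syllable_letter_def eq_nat_nat_iff)

lemma syllable_letter_eq_0_iff: "\<bar>c\<bar> < int q \<Longrightarrow> syllable_letter c = 0 \<longleftrightarrow> c = 0"
proof -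
  have "0 \<le> c mod int q" using q_ge_3 by simp
  then have "syllable_letter c = 0 \<longleftrightarrow> c mod int q = 0" by (simp add: syllable_letter_def)
  then show "\<bar>c\<bar> < int q \<Longrightarrow> syllable_letter c = 0 \<longleftrightarrow> c = 0"
    using int_mod_eq_imp_eq[of c 0 "int q"] by auto
qed

lemma alternating_map_syllable_letter:
  "\<forall>c\<in>set S. \<bar>c\<bar> < int q \<Longrightarrow> alternating S \<Longrightarrow> alternating (map syllable_letter S)"
  by (induction S) (auto simp: alternating_Cons hd_map syllable_letter_eq_0_iff)

lemma letters_mat_replicate: "letters_mat (replicate k x) = mpow (signed_letter x) k"
  by (induction k) auto

lemma letter_syllable_letter: "\<bar>c\<bar> < int q \<Longrightarrow> letter (syllable_letter c) \<simeq> letters_mat (syllable c)"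
proof -
  assume c: "\<bar>c\<bar> < int q"
  consider "c = 0" | "0 < c" | "c < 0" by linarith
  then show ?thesis
  proof cases
    case 1
    then show ?thesis by (simp add: syllable_letter_def letter_def syllable_def signed_letter_def)
  next
    case 2
    then have "syllable_letter c = nat c" "nat c \<noteq> 0" using c by (auto simp: syllable_letter_def)
    then show ?thesis
      using 2
      by (simp add: letter_def syllable_def letters_mat_replicate signed_letter_def unit_sign_def)
  next
    case 3
    define k where "k = nat (- c)"
    have k: "1 \<le> k" "k < q" using 3 c by (auto simp: k_def)
    have "c mod int q = c + int q"
      using mod_pos_pos_trivial[of "c + int q" "int q"] 3 c by simp
    then have "syllable_letter c = q - k" using 3 k unfolding syllable_letter_def k_def by simp
    moreover have "letters_mat (syllable c) = mpow (U_mat q) ((q - 1) * k)"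
      using 3
      by (simp add: syllable_def letters_mat_replicate signed_letter_def unit_sign_def k_def
          mpow_mult)
    moreover have "mpow (U_mat q) ((q - 1) * k) \<simeq> mpow (U_mat q) (q - k)"
      using k by (intro mpow_U_cong diff_one_mult_mod) simp
    ultimately show ?thesis using k by (simp add: letter_def pm_eq_sym)
  qed
qed

lemma word_mat_map_syllable_letter:
  "\<forall>c\<in>set S. \<bar>c\<bar> < int q \<Longrightarrow>
   word_mat (map syllable_letter S) \<simeq> letters_mat (concat (map syllable S))"
  by (induction S) (auto simp: letters_mat_append intro!: pm_eq_mult letter_syllable_letter)

end

section \<open>Runs of equal letters\<close>

lemma zigzag_no_double: "X \<noteq> 0 \<Longrightarrow> \<not> sublist [X, X] (zigzag Y k)"
  by (induction k) (auto simp: sublist_Cons_right)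

lemma T_letters_no_double: "X \<noteq> 0 \<Longrightarrow> \<not> sublist [X, X] (sign_change p n @ T_letters n)"
  using zigzag_no_double[of X] by (auto simp: sign_change_def T_letters_def sublist_Cons_right)

lemma sublist_replicate_double: "2 \<le> a \<Longrightarrow> sublist (replicate a X) ys \<Longrightarrow> sublist [X, X] ys"
proof -
  assume "2 \<le> a" "sublist (replicate a X) ys"
  moreover have "replicate a X = replicate (2 + (a - 2)) X"
    using \<open>2 \<le> a\<close> by (simp only: le_add_diff_inverse)
  then have "replicate a X = [X, X] @ replicate (a - 2) X"
    by (simp only: replicate_add) (simp add: numeral_2_eq_2)
  ultimately show ?thesis by (metis sublist_append_rightI sublist_order.order_trans)
qed

lemma prefix_replicate_mono: "a \<le> b \<Longrightarrow> prefix (replicate a X) (replicate b X)"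
  using replicate_add[of a "b - a" X] by (metis le_add_diff_inverse prefixI)

lemma prefix_run_hecke_letters:
  "X \<in> {1, -1} \<Longrightarrow> \<forall>n\<in>set ns. n \<noteq> 0 \<Longrightarrow> prefix (replicate l X) (hecke_letters p ns)
   \<Longrightarrow> prefix (replicate (l - 1) X) ns"
proof (induction ns arbitrary: p l)
  case Nil
  then show ?case by simp
next
  case (Cons n r)
  show ?case
  proof (cases "l \<le> 1")
    case True then show ?thesis by simp
  next
    case False
    define l' where "l' = l - 2"
    have l: "l = Suc (Suc l')" using False by (simp add: l'_def)
    have X0: "X \<noteq> 0" using Cons.prems by auto
    have pre: "prefix (X # X # replicate l' X) (sign_change p n @ T_letters n @ hecke_letters n r)"
      using Cons.prems(3) l by simp
    then have sp: "sign_change p n = []"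
      using X0 by (auto simp: sign_change_def split: if_splits)
    have k: "nat \<bar>n\<bar> - 1 = 0"
    proof (rule ccontr)
      assume "nat \<bar>n\<bar> - 1 \<noteq> 0"
      then obtain k where "nat \<bar>n\<bar> - 1 = Suc k" by (cases "nat \<bar>n\<bar> - 1") auto
      then have "T_letters n = unit_sign n # 0 # zigzag (unit_sign n) k"
        by (simp add: T_letters_def)
      then show False using pre sp X0 by simp
    qed
    then have fwn: "T_letters n = [unit_sign n]" by (simp add: T_letters_def)
    have sgX: "unit_sign n = X" using pre sp fwn by simp
    have nX: "n = X" using k sgX Cons.prems(2) by (auto simp: unit_sign_def)
    have "prefix (replicate (Suc l') X) (hecke_letters n r)" using pre sp fwn sgX by simp
    then have "prefix (replicate l' X) r" using Cons.IH[of "Suc l'" n] Cons.prems by simp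
    then show ?thesis using l nX by simp
  qed
qed

text \<open>Inside \<open>hecke_letters p ns\<close> a run of equal letters \<open>\<plusminus>1\<close> consists of the blocks of entries
  \<open>\<plusminus>1\<close> of \<open>ns\<close>, extended by at most one letter at either end.\<close>
lemma sublist_run_hecke_letters:
  "X \<in> {1, -1} \<Longrightarrow> \<forall>n\<in>set ns. n \<noteq> 0 \<Longrightarrow> sublist (replicate l X) (hecke_letters p ns)
   \<Longrightarrow> sublist (replicate (l - 2) X) ns"
proof (induction ns arbitrary: p l)
  case Nil
  then show ?case by simp
next
  case (Cons n r)
  have X0: "X \<noteq> 0" using Cons.prems by auto
  have "sublist (replicate l X) ((sign_change p n @ T_letters n) @ hecke_letters n r)"
    using Cons.prems(3) by simp
  then consider "sublist (replicate l X) (sign_change p n @ T_letters n)"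
    | "sublist (replicate l X) (hecke_letters n r)"
    | xs1 xs2 where "replicate l X = xs1 @ xs2" "suffix xs1 (sign_change p n @ T_letters n)"
        "prefix xs2 (hecke_letters n r)"
    unfolding sublist_append by blast
  then show ?case
  proof cases
    case 1
    then have "l < 2" using sublist_replicate_double T_letters_no_double[OF X0] by (meson not_less)
    then show ?thesis by simp
  next
    case 2
    then have "sublist (replicate (l - 2) X) r" using Cons.IH Cons.prems by simp
    then show ?thesis by (auto simp: sublist_Cons_right)
  next
    case 3
    have s1: "xs1 = replicate (length xs1) X" and s2: "xs2 = replicate (length xs2) X"
      using 3(1) by (auto intro!: replicate_eqI dest!: arg_cong[of _ _ set] split: if_splits
          simp: set_replicate_conv_if)
    have "length xs1 < 2"
      using sublist_replicate_double[of "length xs1" X "sign_change p n @ T_letters n"] s1 3(2)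
        T_letters_no_double[OF X0] suffix_imp_sublist by fastforce
    moreover have "prefix (replicate (length xs2 - 1) X) r"
      using prefix_run_hecke_letters[OF Cons.prems(1), of r "length xs2" n] Cons.prems 3(3) s2
      by simp
    moreover have "l = length xs1 + length xs2" using 3(1) by (metis length_append length_replicate)
    moreover have "prefix (replicate (l - 2) X) (replicate (length xs2 - 1) X)"
      using calculation by (intro prefix_replicate_mono) linarith
    ultimately have "prefix (replicate (l - 2) X) r" using prefix_order.order_trans by blast
    then show ?thesis by (auto simp: sublist_Cons_right)
  qed
qed

lemma sublist_syllable_concat: "c \<in> set S \<Longrightarrow> sublist (syllable c) (concat (map syllable S))"
  by (metis concat.simps(2) concat_append list.simps(9) map_append split_list sublist_appendI)

lemma admissible_run_bound:
  assumes "admissible q ns" "sublist (replicate m e) ns" "e \<in> {1, -1}"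
  shows "real m < real q / 2 - 2"
proof -
  obtain ps ss where ns: "ns = ps @ replicate m e @ ss" using assms(2) by (auto simp: sublist_def)
  have "\<forall>t<m. ns ! ((length ps + t) mod length ns) = e"
    using ns by (auto simp: nth_append)
  then show ?thesis using assms(1,3) unfolding admissible_def by blast
qed


section \<open>Rotations of the letter sequence\<close>

lemma zigzag_Suc_snoc: "zigzag X (Suc k) = zigzag X k @ [0, X]"
  by (induction k) auto

lemma zigzag_prefix: "a < b \<Longrightarrow> \<exists>C. zigzag X b = zigzag X a @ 0 # X # C"
proof (induction b)
  case (Suc b)
  show ?case
  proof (cases "a = b")
    case True
    then show ?thesis by (intro exI[of _ "[]"]) (simp only: zigzag_Suc_snoc)
  next
    case False
    then obtain C where C: "zigzag X b = zigzag X a @ 0 # X # C" using Suc by auto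
    show ?thesis
      by (intro exI[of _ "C @ [0, X]"]) (simp only: zigzag_Suc_snoc C append.assoc append_Cons)
  qed
qed simp

lemma length_zigzag: "length (zigzag X k) = 2 * k + 1"
  by (induction k) auto

lemma nth_zigzag: "i < length (zigzag X k) \<Longrightarrow> zigzag X k ! i = (if even i then X else 0)"
  by (induction k arbitrary: i) (auto simp: nth_Cons' length_zigzag)

lemma T_letters_not_Nil: "T_letters n \<noteq> []"
  by (simp add: T_letters_def zigzag_not_Nil)

lemma hd_T_letters_append: "hd (T_letters n @ A) = unit_sign n"
  by (simp add: T_letters_def zigzag_not_Nil hd_zigzag)

lemma hecke_letters_neq_S_Cons:
  "unit_sign n = X \<Longrightarrow> \<forall>m\<in>set r. m \<noteq> 0 \<Longrightarrow> hecke_letters n r \<noteq> 0 # X # A"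
proof (cases r)
  case (Cons m r')
  assume a: "unit_sign n = X" "\<forall>m\<in>set r. m \<noteq> 0"
  show ?thesis
  proof (cases "(0 < n) = (0 < m)")
    case True
    then have "hd (hecke_letters n r) = unit_sign m"
      using Cons hd_hecke_letters[of n m r'] by (simp del: hecke_letters.simps)
    then show ?thesis using unit_sign_neq_0[of m] by auto
  next
    case False
    then have "hecke_letters n r = 0 # T_letters m @ hecke_letters m r'"
      using Cons by (simp add: sign_change_def)
    moreover have "hd (T_letters m) = unit_sign m" by (simp add: T_letters_def hd_zigzag)
    moreover have "unit_sign m \<noteq> X" using a False by (auto simp: unit_sign_def)
    ultimately show ?thesis by (cases "T_letters m") (auto simp: T_letters_def zigzag_not_Nil)
  qed
qed simp

lemma zigzag_append_hecke_letters_eq: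
  assumes "unit_sign n = X" "unit_sign m = X" "\<forall>x\<in>set r. x \<noteq> 0" "\<forall>x\<in>set r'. x \<noteq> 0"
    and eq: "zigzag X a @ hecke_letters n r = zigzag X b @ hecke_letters m r'"
  shows "a = b"
proof (rule linorder_cases)
  assume "a < b"
  then obtain C where "zigzag X b = zigzag X a @ 0 # X # C" using zigzag_prefix by blast
  then have "hecke_letters n r = 0 # X # C @ hecke_letters m r'" using eq by simp
  then show ?thesis using hecke_letters_neq_S_Cons assms(1,3) by blast
next
  assume "b < a"
  then obtain C where "zigzag X a = zigzag X b @ 0 # X # C" using zigzag_prefix by blast
  then have "hecke_letters m r' = 0 # X # C @ hecke_letters n r" using eq by simp
  then show ?thesis using hecke_letters_neq_S_Cons assms(2,4) by blast
qed

lemma hecke_letters_inj: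
  "(0 < p) = (0 < p') \<Longrightarrow> \<forall>n\<in>set ns. n \<noteq> 0 \<Longrightarrow> \<forall>n\<in>set ms. n \<noteq> 0 \<Longrightarrow>
   hecke_letters p ns = hecke_letters p' ms \<Longrightarrow> ns = ms"
proof (induction ns arbitrary: p p' ms)
  case Nil
  then show ?case using hecke_letters_not_Nil by (metis hecke_letters.simps(1))
next
  case (Cons n r)
  obtain m r' where ms: "ms = m # r'"
    using Cons.prems hecke_letters_not_Nil[of "n # r" p] by (cases ms) auto
  have nz: "n \<noteq> 0" "m \<noteq> 0" "\<forall>x\<in>set r. x \<noteq> 0" "\<forall>x\<in>set r'. x \<noteq> 0"
    using Cons.prems ms by auto
  have eq: "sign_change p n @ T_letters n @ hecke_letters n r =
      sign_change p' m @ T_letters m @ hecke_letters m r'"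
    using Cons.prems(4) ms by simp
  have "(0 < n) = (0 < m)"
    using hd_hecke_letters[of p n r] hd_hecke_letters[of p' m r'] Cons.prems(1,4) ms
      unit_sign_neq_0[of n] unit_sign_neq_0[of m]
    by (auto simp del: hecke_letters.simps split: if_splits)
  then have "unit_sign m = unit_sign n" "sign_change p n = sign_change p' m"
    using Cons.prems(1) by (simp_all add: unit_sign_def sign_change_def)
  then have "zigzag (unit_sign n) (nat \<bar>n\<bar> - 1) @ hecke_letters n r =
      zigzag (unit_sign n) (nat \<bar>m\<bar> - 1) @ hecke_letters m r'"
    using eq by (simp add: T_letters_def)
  moreover from this have "nat \<bar>n\<bar> - 1 = nat \<bar>m\<bar> - 1"
    using zigzag_append_hecke_letters_eq nz \<open>unit_sign m = unit_sign n\<close> by blast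
  ultimately have "n = m" "hecke_letters n r = hecke_letters m r'"
    using nz \<open>(0 < n) = (0 < m)\<close> by (auto simp: unit_sign_def)
  then show ?case using Cons.IH[of n m r'] nz ms by simp
qed

lemma cyclic_letters_sign:
  assumes "ns \<noteq> []" "\<forall>n\<in>set ns. n \<noteq> 0"
  shows "(0 < last ns) \<longleftrightarrow>
    (if hd (cyclic_letters ns) = 0 then cyclic_letters ns ! 1 < 0 else 0 < hd (cyclic_letters ns))"
proof -
  obtain n r where ns: "ns = n # r" using assms by (cases ns) auto
  have "n \<noteq> 0" using assms ns by auto
  have L: "cyclic_letters ns = sign_change (last ns) n @ T_letters n @ hecke_letters n r"
    using ns by (simp add: cyclic_letters_def)
  show ?thesis
  proof (cases "(0 < last ns) = (0 < n)")
    case True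
    then have "hd (cyclic_letters ns) = unit_sign n"
      using L by (simp add: sign_change_def hd_T_letters_append)
    then show ?thesis using True \<open>n \<noteq> 0\<close> by (auto simp: unit_sign_def)
  next
    case False
    then have "cyclic_letters ns = 0 # T_letters n @ hecke_letters n r"
      using L by (simp add: sign_change_def)
    moreover have "T_letters n = unit_sign n # tl (T_letters n)"
      by (metis T_letters_not_Nil hd_T_letters_append append_Nil2 list.collapse)
    ultimately have "hd (cyclic_letters ns) = 0" "cyclic_letters ns ! 1 = unit_sign n"
      by (metis list.sel(1), metis append_Cons nth_Cons_0 nth_Cons_Suc One_nat_def)
    then show ?thesis using False \<open>n \<noteq> 0\<close> by (auto simp: unit_sign_def)
  qed
qed

lemma cyclic_letters_inj:
  assumes "ns \<noteq> []" "ms \<noteq> []" "\<forall>n\<in>set ns. n \<noteq> 0" "\<forall>n\<in>set ms. n \<noteq> 0"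
    and "cyclic_letters ns = cyclic_letters ms"
  shows "ns = ms"
proof -
  have "(0 < last ns) = (0 < last ms)"
    using cyclic_letters_sign[OF assms(1,3)] cyclic_letters_sign[OF assms(2,4)] assms(5) by simp
  then show ?thesis
    using hecke_letters_inj[of "last ns" "last ms" ns ms] assms by (simp add: cyclic_letters_def)
qed

lemma hecke_letters_append:
  "hecke_letters p (xs @ ys) = hecke_letters p xs @ hecke_letters (last (p # xs)) ys"
  by (induction xs arbitrary: p) auto

lemma cyclic_letters_rotate1:
  "cyclic_letters (r @ [n]) =
     rotate (length (sign_change (last (n # r)) n @ T_letters n)) (cyclic_letters (n # r))"
proof -
  have "cyclic_letters (r @ [n]) = hecke_letters n r @ sign_change (last (n # r)) n @ T_letters n"
    by (simp add: cyclic_letters_def hecke_letters_append)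
  moreover have
    "cyclic_letters (n # r) = (sign_change (last (n # r)) n @ T_letters n) @ hecke_letters n r"
    by (simp add: cyclic_letters_def)
  ultimately show ?thesis by (simp only: rotate_append)
qed

lemma zigzag_S_neighbours:
  assumes "X \<noteq> 0" "i < length (zigzag X k)" "zigzag X k ! i = 0"
  shows "0 < i" "i + 1 < length (zigzag X k)" "zigzag X k ! (i + 1) = zigzag X k ! (i - 1)"
proof -
  have "odd i" using assms nth_zigzag[of i X k] by (auto split: if_splits)
  then show "0 < i" "i + 1 < length (zigzag X k)"
    using assms(2) by (auto simp: length_zigzag elim!: oddE)
  then show "zigzag X k ! (i + 1) = zigzag X k ! (i - 1)"
    using \<open>odd i\<close> nth_zigzag[of "i + 1" X k] nth_zigzag[of "i - 1" X k] by simp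
qed

lemma block_S_neighbours:
  assumes "0 < r" "r < length (sign_change p n @ T_letters n)"
    and "(sign_change p n @ T_letters n) ! r = 0"
  shows "r + 1 < length (sign_change p n @ T_letters n)"
    "(sign_change p n @ T_letters n) ! (r + 1) = (sign_change p n @ T_letters n) ! (r - 1)"
proof -
  define Z where "Z = zigzag (unit_sign n) (nat \<bar>n\<bar> - 1)"
  have Z: "T_letters n = Z" by (simp add: T_letters_def Z_def)
  note S = zigzag_S_neighbours[of "unit_sign n" _ "nat \<bar>n\<bar> - 1", OF unit_sign_neq_0, folded Z_def]
  have "r + 1 < length (sign_change p n @ Z) \<and>
      (sign_change p n @ Z) ! (r + 1) = (sign_change p n @ Z) ! (r - 1)"
  proof (cases "sign_change p n = []")
    case True
    then show ?thesis using S[of r] assms unfolding Z by simp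
  next
    case False
    then have "sign_change p n = [0]" by (simp add: sign_change_def split: if_splits)
    moreover have "0 < r - 1" "r < length Z" "Z ! r = Z ! (r - 2)"
      using S[of "r - 1"] assms calculation unfolding Z by (simp_all add: nth_Cons' numeral_2_eq_2)
    ultimately show ?thesis using assms(1) by (simp add: nth_Cons' numeral_2_eq_2)
  qed
  then show "r + 1 < length (sign_change p n @ T_letters n)"
    "(sign_change p n @ T_letters n) ! (r + 1) = (sign_change p n @ T_letters n) ! (r - 1)"
    by (simp_all add: Z)
qed

lemma cyclic_letters_ends:
  assumes "ms \<noteq> []" "\<forall>m\<in>set ms. m \<noteq> 0" "hd ms < 0" "0 < last ms"
  shows "hd (cyclic_letters ms) = 0" "cyclic_letters ms ! 1 = -1" "last (cyclic_letters ms) = 1"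
proof -
  obtain m r where ms: "ms = m # r" using assms by (cases ms) auto
  have L: "cyclic_letters ms = 0 # (T_letters m @ hecke_letters m r)"
    using ms assms by (simp add: cyclic_letters_def sign_change_def)
  show "hd (cyclic_letters ms) = 0" using L by simp
  show "cyclic_letters ms ! 1 = -1"
    using L hd_T_letters_append[of m "hecke_letters m r"] T_letters_not_Nil[of m] assms ms
    by (cases "T_letters m @ hecke_letters m r") (auto simp: unit_sign_def)
  show "last (cyclic_letters ms) = 1"
    using last_hecke_letters[of ms "last ms"] assms by (simp add: cyclic_letters_def unit_sign_def)
qed

text \<open>Inside the block of an entry, an \<open>S\<close> lies between two equal letters.\<close>
lemma cyclic_letters_rotate_within_block:
  assumes ns: "ns = n # t" and r: "0 < r" "r < length (sign_change (last ns) n @ T_letters n)"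
    and S: "hd (rotate r (cyclic_letters ns)) = 0"
  shows "rotate r (cyclic_letters ns) ! 1 = last (rotate r (cyclic_letters ns))"
proof -
  define seg where "seg = sign_change (last ns) n @ T_letters n"
  define L where "L = cyclic_letters ns"
  have L: "L = seg @ hecke_letters n t" using ns by (simp add: L_def cyclic_letters_def seg_def)
  have rs: "r < length seg" using r by (simp add: seg_def)
  then have len: "r < length L" using L by simp
  then have "L \<noteq> []" by auto
  then have "L ! r = hd (rotate r L)" using nth_rotate[of 0 L r] len by (simp add: hd_conv_nth)
  then have "seg ! r = 0" using S L rs by (simp add: L_def nth_append)
  then have seg: "r + 1 < length seg" "seg ! (r + 1) = seg ! (r - 1)"
    using block_S_neighbours[of r "last ns" n] r unfolding seg_def by simp_all
  have "rotate r L ! 1 = L ! (r + 1)"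
    using nth_rotate[of 1 L r] seg L by simp
  also have "\<dots> = seg ! (r - 1)" using seg L by (simp add: nth_append)
  also have "\<dots> = L ! (r - 1)" using rs L by (simp add: nth_append less_imp_diff_less)
  also have "\<dots> = last (rotate r L)"
  proof -
    have "r + (length L - 1) = (r - 1) + length L" using r len by simp
    then have "(r + (length L - 1)) mod length L = r - 1"
      using len by (simp only: mod_add_self2) simp
    moreover have "last (rotate r L) = rotate r L ! (length L - 1)"
      using \<open>L \<noteq> []\<close> by (simp add: last_conv_nth)
    ultimately show ?thesis using nth_rotate[of "length L - 1" L r] len by simp
  qed
  finally show ?thesis by (simp add: L_def)
qed

lemma cyclic_letters_rotate_imp_rotate:
  assumes ms: "ms \<noteq> []" "\<forall>m\<in>set ms. m \<noteq> 0" "hd ms < 0" "0 < last ms"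
  shows "ns \<noteq> [] \<Longrightarrow> \<forall>n\<in>set ns. n \<noteq> 0 \<Longrightarrow> r < length (cyclic_letters ns) \<Longrightarrow>
    cyclic_letters ms = rotate r (cyclic_letters ns) \<Longrightarrow> \<exists>j. ms = rotate j ns"
proof (induction r arbitrary: ns rule: less_induct)
  case (less r ns)
  obtain n t where ns: "ns = n # t" using less.prems by (cases ns) auto
  define d where "d = length (sign_change (last ns) n @ T_letters n)"
  consider "r = 0" | "d \<le> r" "0 < r" | "0 < r" "r < d" by linarith
  then show ?case
  proof cases
    case 1
    then have "ms = ns" using cyclic_letters_inj[of ms ns] ms less.prems by simp
    then show ?thesis by (metis rotate0 id_apply)
  next
    case 2
    have rot: "cyclic_letters (t @ [n]) = rotate d (cyclic_letters ns)"
      using cyclic_letters_rotate1[of t n] ns by (simp add: d_def)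
    have "d \<noteq> 0" using T_letters_not_Nil[of n] by (simp add: d_def)
    moreover have "cyclic_letters ms = rotate (r - d) (cyclic_letters (t @ [n]))"
      using rot less.prems(4) 2 by (simp add: rotate_rotate)
    moreover have "r - d < r" "r - d < length (cyclic_letters (t @ [n]))"
      using 2 rot less.prems(3) \<open>d \<noteq> 0\<close> by auto
    moreover have "\<forall>x\<in>set (t @ [n]). x \<noteq> 0" using less.prems(2) ns by auto
    ultimately obtain j where "ms = rotate j (t @ [n])"
      using less.IH[of "r - d" "t @ [n]"] by blast
    moreover have "t @ [n] = rotate 1 ns" using ns by simp
    ultimately have "ms = rotate (j + 1) ns" by (simp only: rotate_rotate)
    then show ?thesis by blast
  next
    case 3
    then show ?thesis
      using cyclic_letters_rotate_within_block[OF ns, of r] cyclic_letters_ends[OF ms] less.prems(4)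
      by (simp add: d_def)
  qed
qed

section \<open>The conjugacy criterion\<close>

lemma concat_rotate:
  "concat (rotate n xs) = rotate (length (concat (take (n mod length xs) xs))) (concat xs)"
proof -
  define m where "m = n mod length xs"
  have "concat (rotate n xs) = concat (drop m xs) @ concat (take m xs)"
    by (simp add: rotate_drop_take m_def)
  moreover have "concat xs = concat (take m xs) @ concat (drop m xs)"
    by (metis append_take_drop_id concat_append)
  ultimately show ?thesis by (simp add: m_def rotate_append)
qed

lemma rotate_inverse: "\<exists>c. rotate c (rotate a xs) = xs"
proof (cases "xs = []")
  case False
  define k where "k = length xs"
  have "a mod k \<le> k" using False by (simp add: k_def)
  moreover have "a = a mod k + k * (a div k)" by simp
  ultimately have "k - a mod k + a = k + k * (a div k)" by linarith
  then have "(k - a mod k + a) mod k = 0" by simp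
  then show ?thesis by (metis k_def rotate_id rotate_rotate)
qed simp

lemma cyclic_transition:
  assumes "i < length xs" "P (xs ! i)" "j < length xs" "\<not> P (xs ! j)"
  shows "\<exists>k<length xs. P (xs ! k) \<and> \<not> P (xs ! (Suc k mod length xs))"
proof (rule ccontr)
  assume "\<not> ?thesis"
  then have step: "k < length xs \<Longrightarrow> P (xs ! k) \<Longrightarrow> P (xs ! (Suc k mod length xs))" for k
    by blast
  have "P (xs ! ((i + t) mod length xs))" for t
  proof (induction t)
    case (Suc t)
    have "(i + t) mod length xs < length xs" using assms(1) by (intro mod_less_divisor) linarith
    then show ?case using Suc step[of "(i + t) mod length xs"] by (simp add: mod_Suc_eq)
  qed (use assms(1,2) in simp)
  moreover have "(i + (j + length xs - i)) mod length xs = j" using assms(1,3) by simp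
  ultimately show False using assms(4) by metis
qed

lemma admissible_rotate_sign_change:
  assumes "admissible q ns"
  shows "\<exists>a. hd (rotate a ns) < 0 \<and> 0 < last (rotate a ns)"
proof -
  obtain i j where "i < length ns" "0 < ns ! i" "j < length ns" "ns ! j < 0"
    using assms by (auto simp: admissible_def in_set_conv_nth)
  then obtain k where k: "k < length ns" "0 < ns ! k" "\<not> 0 < ns ! (Suc k mod length ns)"
    using cyclic_transition[of i ns "\<lambda>n. 0 < n" j] by auto
  have "ns ! (Suc k mod length ns) \<noteq> 0" using assms k(1) by (simp add: admissible_def)
  moreover have "ns \<noteq> []" using k(1) by auto
  then have "hd (rotate (Suc k) ns) = ns ! (Suc k mod length ns)" by (rule hd_rotate_conv_nth)
  moreover have "last (rotate (Suc k) ns) = ns ! k"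
  proof -
    have "Suc k + (length ns - 1) = k + length ns" using k(1) by simp
    then have "(Suc k + (length ns - 1)) mod length ns = k" using k(1) by simp
    then show ?thesis
      using k(1) nth_rotate[of "length ns - 1" ns "Suc k"] \<open>ns \<noteq> []\<close>
      by (simp add: last_conv_nth del: rotate_Suc)
  qed
  ultimately show ?thesis using k by (intro exI[of _ "Suc k"]) simp
qed

lemma admissible_rotate: "admissible q ns \<Longrightarrow> admissible q (rotate a ns)"
proof -
  assume a: "admissible q ns"
  define k where "k = length ns"
  have k0: "0 < k" using a by (simp add: admissible_def k_def)
  have "\<forall>e\<in>{1, -1}. \<forall>i m. (\<forall>t<m. rotate a ns ! ((i + t) mod length (rotate a ns)) = e)
         \<longrightarrow> real m < real q / 2 - 2"
  proof (intro ballI allI impI)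
    fix e i m assume e: "e \<in> {1, -1::int}"
      and h: "\<forall>t<m. rotate a ns ! ((i + t) mod length (rotate a ns)) = e"
    have "\<forall>t<m. ns ! ((a + i + t) mod length ns) = e"
    proof (intro allI impI)
      fix t assume "t < m"
      then have "rotate a ns ! ((i + t) mod k) = e" using h by (simp add: k_def)
      moreover have "rotate a ns ! ((i + t) mod k) = ns ! ((a + (i + t) mod k) mod k)"
        using k0 by (simp add: nth_rotate k_def)
      moreover have "(a + (i + t) mod k) mod k = (a + i + t) mod k"
        by (simp add: mod_add_right_eq add.assoc)
      ultimately show "ns ! ((a + i + t) mod length ns) = e" by (simp add: k_def)
    qed
    then show "real m < real q / 2 - 2" using a e unfolding admissible_def by blast
  qed
  then show ?thesis using a by (simp add: admissible_def)
qed


lemma hecke_word_rotate_conj: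
  "\<exists>g\<in>hecke_group q. g ** hecke_word q ns = hecke_word q (rotate r ns) ** g"
proof -
  define m where "m = r mod length ns"
  have "rotate r ns = drop m ns @ take m ns" by (simp add: rotate_drop_take m_def)
  then have "hecke_word q (drop m ns) ** hecke_word q ns =
      hecke_word q (rotate r ns) ** hecke_word q (drop m ns)"
    by (metis append_take_drop_id hecke_word_append matrix_mul_assoc)
  then show ?thesis using hecke_word_in_hecke_group by blast
qed

lemma conj_PSL_rotate: "conj_PSL q (hecke_word q ns) (hecke_word q (rotate r ns))"
proof -
  obtain g where g: "g \<in> hecke_group q" "g ** hecke_word q ns = hecke_word q (rotate r ns) ** g"
    using hecke_word_rotate_conj by blast
  then have "g ** hecke_word q ns ** matrix_inv g = hecke_word q (rotate r ns)"
    using matrix_inv_mult(1)[OF hecke_group_invertible[OF g(1)]]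
    by (simp add: matrix_mul_assoc[symmetric])
  then show ?thesis using g(1) by (auto simp: conj_PSL_def)
qed

text \<open>Conjugacy in \<open>PSL(2,\<real>)\<close> without inverses.\<close>
definition conj_pm :: "nat \<Rightarrow> mat2 \<Rightarrow> mat2 \<Rightarrow> bool" where
  "conj_pm q A B \<longleftrightarrow> (\<exists>g\<in>hecke_group q. g ** A \<simeq> B ** g)"

lemma conj_PSL_imp_conj_pm: "conj_PSL q A B \<Longrightarrow> conj_pm q A B"
proof -
  assume "conj_PSL q A B"
  then obtain g where g: "g \<in> hecke_group q" "g ** A ** matrix_inv g \<simeq> B"
    by (auto simp: conj_PSL_def pm_eq_def)
  have "g ** A = (g ** A ** matrix_inv g) ** g"
    using matrix_inv_mult(2)[OF hecke_group_invertible[OF g(1)]]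
    by (simp add: matrix_mul_assoc[symmetric])
  also have "\<dots> \<simeq> B ** g" by (intro pm_eq_mult_right g(2))
  finally show ?thesis using g(1) by (auto simp: conj_pm_def)
qed

lemma conj_pm_cong:
  assumes "A \<simeq> A'" "B \<simeq> B'" "conj_pm q A B"
  shows "conj_pm q A' B'"
proof -
  obtain g where g: "g \<in> hecke_group q" "g ** A \<simeq> B ** g" using assms(3) by (auto simp: conj_pm_def)
  have "g ** A' \<simeq> g ** A" by (intro pm_eq_mult_left pm_eq_sym[OF assms(1)])
  also have "\<dots> \<simeq> B ** g" by (rule g(2))
  also have "\<dots> \<simeq> B' ** g" by (intro pm_eq_mult_right assms(2))
  finally show ?thesis using g(1) by (auto simp: conj_pm_def)
qed

lemma conj_pm_trans: "conj_pm q A B \<Longrightarrow> conj_pm q B C \<Longrightarrow> conj_pm q A C"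
proof -
  assume "conj_pm q A B" "conj_pm q B C"
  then obtain g h where g: "g \<in> hecke_group q" "g ** A \<simeq> B ** g"
    and h: "h \<in> hecke_group q" "h ** B \<simeq> C ** h"
    by (auto simp: conj_pm_def)
  have "(h ** g) ** A = h ** (g ** A)" by (simp add: matrix_mul_assoc)
  also have "\<dots> \<simeq> h ** (B ** g)" by (intro pm_eq_mult_left g(2))
  also have "\<dots> = (h ** B) ** g" by (simp add: matrix_mul_assoc)
  also have "\<dots> \<simeq> (C ** h) ** g" by (intro pm_eq_mult_right h(2))
  also have "\<dots> = C ** (h ** g)" by (simp add: matrix_mul_assoc)
  finally show ?thesis using hecke_group_mult g h by (auto simp: conj_pm_def)
qed

lemma conj_pm_rotate: "conj_pm q (hecke_word q ns) (hecke_word q (rotate r ns))"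
  using hecke_word_rotate_conj[of q ns r] pm_eq_refl unfolding conj_pm_def by metis

lemma conj_pm_rotate_rotate:
  "conj_pm q (hecke_word q ns) (hecke_word q ms) \<Longrightarrow>
   conj_pm q (hecke_word q (rotate a ns)) (hecke_word q (rotate b ms))"
proof -
  assume "conj_pm q (hecke_word q ns) (hecke_word q ms)"
  moreover obtain c where "rotate c (rotate a ns) = ns" using rotate_inverse by blast
  then have "conj_pm q (hecke_word q (rotate a ns)) (hecke_word q ns)"
    using conj_pm_rotate[of q "rotate a ns" c] by simp
  ultimately show ?thesis using conj_pm_trans conj_pm_rotate by blast
qed

lemma last_concat_syllable: "S \<noteq> [] \<Longrightarrow> last (concat (map syllable S)) = last (syllable (last S))"
  by (induction S rule: rev_induct) (auto simp: syllable_def)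

context hecke
begin

text \<open>This is where the bound on runs of \<open>\<plusminus>1\<close> in admissible sequences enters.\<close>
lemma syllable_bound:
  assumes adm: "admissible q ns" and S: "concat (map syllable S) = cyclic_letters ns"
    and c: "c \<in> set S"
  shows "2 * \<bar>c\<bar> < int q"
proof (cases "c = 0")
  case True
  then show ?thesis using q_ge_3 by simp
next
  case False
  have nz: "\<forall>n\<in>set ns. n \<noteq> 0" using adm by (simp add: admissible_def)
  have X: "unit_sign c \<in> {1, -1}" by (simp add: unit_sign_def)
  have "sublist (replicate (nat \<bar>c\<bar>) (unit_sign c)) (hecke_letters (last ns) ns)"
    using sublist_syllable_concat[OF c] S False by (simp add: syllable_def cyclic_letters_def)
  then have "sublist (replicate (nat \<bar>c\<bar> - 2) (unit_sign c)) ns"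
    by (rule sublist_run_hecke_letters[OF X nz])
  then have "real (nat \<bar>c\<bar> - 2) < real q / 2 - 2"
    using admissible_run_bound[OF adm _ X] by blast
  then show ?thesis by linarith
qed

lemma cyclically_reduced_map_syllable_letter:
  assumes "alternating S" "\<forall>c\<in>set S. \<bar>c\<bar> < int q" "S \<noteq> []" "hd S = 0" "last S \<noteq> 0"
  shows "cyclically_reduced (map syllable_letter S)"
proof -
  have "reduced (map syllable_letter S)"
    using alternating_map_syllable_letter[OF assms(2,1)] syllable_letter_less
    by (auto simp: reduced_def)
  moreover have "hd (map syllable_letter S) = 0" "last (map syllable_letter S) \<noteq> 0"
    using assms syllable_letter_eq_0_iff[of "last S"]
    by (simp_all add: hd_map last_map syllable_letter_def)
  moreover have "2 \<le> length (map syllable_letter S)"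
    using assms(3-5) by (cases S; cases "tl S") auto
  ultimately show ?thesis using assms(3) by (simp add: cyclically_reduced_def)
qed

lemma hecke_word_syllables:
  assumes adm: "admissible q ns" and ns: "hd ns < 0" "0 < last ns"
  obtains S where "concat (map syllable S) = cyclic_letters ns" "\<forall>c\<in>set S. 2 * \<bar>c\<bar> < int q"
    "cyclically_reduced (map syllable_letter S)"
    "word_mat (map syllable_letter S) \<simeq> hecke_word q ns"
proof -
  have ne: "ns \<noteq> []" and nz: "\<forall>n\<in>set ns. n \<noteq> 0" using adm by (auto simp: admissible_def)
  have L: "hd (cyclic_letters ns) = 0" "last (cyclic_letters ns) = 1" "cyclic_letters ns \<noteq> []"
    using cyclic_letters_ends[OF ne nz ns] hecke_letters_not_Nil[OF ne]
    by (auto simp: cyclic_letters_def)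
  obtain S where S: "concat (map syllable S) = cyclic_letters ns" "alternating S" "S \<noteq> []"
    "hd S = 0 \<longleftrightarrow> hd (cyclic_letters ns) = 0"
    using syllable_decomposition[OF well_formed_hecke_letters[OF nz]] L(3)
    by (auto simp: cyclic_letters_def)
  have bound: "\<forall>c\<in>set S. 2 * \<bar>c\<bar> < int q" using syllable_bound[OF adm S(1)] by blast
  then have "\<forall>c\<in>set S. \<bar>c\<bar> < int q" by force
  moreover have "last S \<noteq> 0"
    using last_concat_syllable[OF S(3)] S(1) L(2) by (auto simp: syllable_def)
  ultimately have "cyclically_reduced (map syllable_letter S)"
    using S L(1) by (intro cyclically_reduced_map_syllable_letter) auto
  moreover have "word_mat (map syllable_letter S) \<simeq> letters_mat (cyclic_letters ns)"
    using word_mat_map_syllable_letter[OF \<open>\<forall>c\<in>set S. \<bar>c\<bar> < int q\<close>] S(1) by simp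
  then have "word_mat (map syllable_letter S) \<simeq> hecke_word q ns"
    using cyclic_letters_mat[OF ne nz ns(2)] by (rule pm_eq_trans)
  ultimately show ?thesis using that S(1) bound by blast
qed

lemma conj_pm_syllables_rotate:
  assumes conj: "conj_pm q (word_mat (map syllable_letter S)) (word_mat (map syllable_letter S'))"
    and S: "cyclically_reduced (map syllable_letter S)" "\<forall>c\<in>set S. 2 * \<bar>c\<bar> < int q"
    and S': "cyclically_reduced (map syllable_letter S')" "\<forall>c\<in>set S'. 2 * \<bar>c\<bar> < int q"
  shows "\<exists>r. S' = rotate r S"
proof -
  obtain g where g: "g \<in> hecke_group q"
    "g ** word_mat (map syllable_letter S) \<simeq> word_mat (map syllable_letter S') ** g"
    using conj by (auto simp: conj_pm_def)
  obtain x where x: "reduced x" "g \<simeq> word_mat x" using hecke_group_reduced_word[OF g(1)] by blast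
  have "word_mat x ** word_mat (map syllable_letter S) \<simeq> g ** word_mat (map syllable_letter S)"
    by (intro pm_eq_mult_right pm_eq_sym[OF x(2)])
  also have "\<dots> \<simeq> word_mat (map syllable_letter S') ** g" by (rule g(2))
  also have "\<dots> \<simeq> word_mat (map syllable_letter S') ** word_mat x" by (intro pm_eq_mult_left x(2))
  finally have
    "word_mat x ** word_mat (map syllable_letter S) \<simeq> word_mat (map syllable_letter S') ** word_mat x" .
  then obtain r where "map syllable_letter S' = map syllable_letter (rotate r S)"
    using conj_cyclically_reduced_rotate[OF x(1) S(1) S'(1)] by (auto simp: rotate_map)
  moreover have "inj_on syllable_letter (set S' \<union> set (rotate r S))"
    using S(2) S'(2) syllable_letter_inj by (auto simp: inj_on_def)
  ultimately show ?thesis using inj_on_map_eq_map by blast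
qed

lemma conj_pm_imp_rotate_normalized:
  assumes ns: "admissible q ns" "hd ns < 0" "0 < last ns"
    and ms: "admissible q ms" "hd ms < 0" "0 < last ms"
    and conj: "conj_pm q (hecke_word q ns) (hecke_word q ms)"
  shows "\<exists>j. ms = rotate j ns"
proof -
  obtain S where S: "concat (map syllable S) = cyclic_letters ns" "\<forall>c\<in>set S. 2 * \<bar>c\<bar> < int q"
    "cyclically_reduced (map syllable_letter S)"
    "word_mat (map syllable_letter S) \<simeq> hecke_word q ns"
    using hecke_word_syllables[OF ns] by blast
  obtain S' where S': "concat (map syllable S') = cyclic_letters ms" "\<forall>c\<in>set S'. 2 * \<bar>c\<bar> < int q"
    "cyclically_reduced (map syllable_letter S')"
    "word_mat (map syllable_letter S') \<simeq> hecke_word q ms"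
    using hecke_word_syllables[OF ms] by blast
  have "conj_pm q (word_mat (map syllable_letter S)) (word_mat (map syllable_letter S'))"
    using conj_pm_cong[OF pm_eq_sym[OF S(4)] pm_eq_sym[OF S'(4)] conj] .
  then obtain r where "S' = rotate r S"
    using conj_pm_syllables_rotate S(2,3) S'(2,3) by blast
  then have "cyclic_letters ms = concat (rotate r (map syllable S))"
    using S'(1) by (simp add: rotate_map)
  then obtain r' where r': "cyclic_letters ms = rotate r' (cyclic_letters ns)"
    using S(1) concat_rotate[of r "map syllable S"] by auto
  have ne: "ns \<noteq> []" "\<forall>n\<in>set ns. n \<noteq> 0" "ms \<noteq> []" "\<forall>n\<in>set ms. n \<noteq> 0"
    using ns ms by (auto simp: admissible_def)
  then have "cyclic_letters ns \<noteq> []" by (simp add: cyclic_letters_def hecke_letters_not_Nil)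
  then have "r' mod length (cyclic_letters ns) < length (cyclic_letters ns)" by simp
  moreover have "cyclic_letters ms = rotate (r' mod length (cyclic_letters ns)) (cyclic_letters ns)"
    using r' by (metis rotate_conv_mod)
  ultimately show ?thesis
    using cyclic_letters_rotate_imp_rotate[OF ne(3,4) ms(2,3) ne(1,2)] by blast
qed

theorem conj_pm_imp_rotate:
  assumes "admissible q ns" "admissible q ms" "conj_pm q (hecke_word q ns) (hecke_word q ms)"
  shows "\<exists>r. ms = rotate r ns"
proof -
  obtain a b where a: "hd (rotate a ns) < 0" "0 < last (rotate a ns)"
    and b: "hd (rotate b ms) < 0" "0 < last (rotate b ms)"
    using admissible_rotate_sign_change[OF assms(1)] admissible_rotate_sign_change[OF assms(2)]
    by blast
  obtain j where "rotate b ms = rotate j (rotate a ns)"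
    using conj_pm_imp_rotate_normalized[OF admissible_rotate[OF assms(1)] a
        admissible_rotate[OF assms(2)] b] conj_pm_rotate_rotate[OF assms(3)]
    by blast
  moreover obtain c where "rotate c (rotate b ms) = ms" using rotate_inverse by blast
  ultimately have "ms = rotate (c + (j + a)) ns" by (simp add: rotate_rotate)
  then show ?thesis by blast
qed

end

theorem lemma2p2:
  fixes q :: nat and ns ms :: "int list"
  assumes "q \<ge> 3" and "admissible q ns" and "admissible q ms"
  shows "conj_PSL q (hecke_word q ns) (hecke_word q ms) \<longleftrightarrow> (\<exists>r. ms = rotate r ns)"
proof
  assume "conj_PSL q (hecke_word q ns) (hecke_word q ms)"
  then show "\<exists>r. ms = rotate r ns"
    using hecke.conj_pm_imp_rotate[OF _ assms(2,3)] conj_PSL_imp_conj_pm assms(1)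
    by (simp add: hecke_def)
next
  assume "\<exists>r. ms = rotate r ns"
  then show "conj_PSL q (hecke_word q ns) (hecke_word q ms)" using conj_PSL_rotate by blast
qed
end
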